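(* Let $(H,\Delta)$ be a Hopf algebra and $(A,\alpha)$ a Galois coaction with $H$-coinvariant local units. Let $p\in M(A^\alpha)$ be an idempotent with $A^\alpha pA^\alpha=A^\alpha$. Then $\alpha$ restricts to a Galois coaction $\beta$ on $B=pAp$, and $(B,\beta)$ is $H$-equivariantly Morita equivalent to $(A,\alpha)$ (via the context $(Ap,pA)$).
   Context: An $H$-comodule algebra $(A,\alpha)$ is a (possibly non-unital) algebra with algebra map $\alpha:A\to A\otimes H$ making $A$ a right $H$-comodule; $A^\alpha=\{a:\alpha(a)=a\otimes1\}$; $H$-coinvariant local units: every finite subset of $A$ admits an idempotent $e\in A^\alpha$ acting as two-sided unit on it. $(A,\alpha)$ is a Galois coaction if the Galois map $A\otimes_{A^\alpha}A\to A\otimes H$, $a\otimes b\mapsto(a\otimes1)\alpha(b)$, is bijective. $M(D)$ is the multiplier algebra of $D$ (pairs $(\lambda,\rho)$ of linear maps on $D$ with $\lambda(xy)=\lambda(x)y$, $\rho(xy)=x\rho(y)$, $x\lambda(y)=\rho(x)y$); since $A^\alpha\subseteq A$ is non-degenerate under the coinvariant local units assumption, $M(A^\alpha)\subseteq M(A)$, so $pAp$ makes sense. An $H$-equivariant Morita context between comodule algebras is a Morita context (associative pairings $A_{ij}\times A_{jl}\to A_{il}$) all of whose spaces are $H$-comodules and whose multiplications are comodule maps; strict if all $A_{ij}\otimes_{A_{jj}}A_{ji}\to A_{ii}$ are bijective; equivariant Morita equivalence means existence of a strict equivariant Morita context. *)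

theory Defs
  imports Complex_Main
begin

(* Conventions.  All vector spaces are over a field 'k.  Scalar        *)
(* multiplications are explicit functions.  An element of a tensor      *)
(* product V (x)_R W of (sub)spaces is represented by a finite formal   *)
(* sum, i.e. a list of pairs (a list of triples for triple tensors).    *)
(* Two formal sums are equal in the tensor product iff every            *)
(* (R-balanced) bilinear functional V x W -> k takes the same value on  *)
(* them; since the algebraic dual of a vector space separates points,   *)
(* this is exactly equality in the tensor product.                      *)

definition lsubspace :: "('k::field \<Rightarrow> 'v::ab_group_add \<Rightarrow> 'v) \<Rightarrow> 'v set \<Rightarrow> bool" where
  "lsubspace sc V \<longleftrightarrow> 0 \<in> V \<and> (\<forall>x\<in>V. \<forall>y\<in>V. x + y \<in> V) \<and> (\<forall>c. \<forall>x\<in>V. sc c x \<in> V)"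

definition bilin_on ::
  "('k::field \<Rightarrow> 'v::ab_group_add \<Rightarrow> 'v) \<Rightarrow> ('k \<Rightarrow> 'w::ab_group_add \<Rightarrow> 'w) \<Rightarrow> 'v set \<Rightarrow> 'w set \<Rightarrow> ('v \<Rightarrow> 'w \<Rightarrow> 'k) \<Rightarrow> bool" where
  "bilin_on sv sw V W \<phi> \<longleftrightarrow>
     (\<forall>a\<in>V. \<forall>a'\<in>V. \<forall>b\<in>W. \<phi> (a + a') b = \<phi> a b + \<phi> a' b) \<and>
     (\<forall>a\<in>V. \<forall>b\<in>W. \<forall>b'\<in>W. \<phi> a (b + b') = \<phi> a b + \<phi> a b') \<and>
     (\<forall>c. \<forall>a\<in>V. \<forall>b\<in>W. \<phi> (sv c a) b = c * \<phi> a b \<and> \<phi> a (sw c b) = c * \<phi> a b)"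

definition tensor_eq ::
  "('k::field \<Rightarrow> 'v::ab_group_add \<Rightarrow> 'v) \<Rightarrow> ('k \<Rightarrow> 'w::ab_group_add \<Rightarrow> 'w) \<Rightarrow> 'v set \<Rightarrow> 'w set \<Rightarrow>
     ('v \<times> 'w) list \<Rightarrow> ('v \<times> 'w) list \<Rightarrow> bool" where
  "tensor_eq sv sw V W xs ys \<longleftrightarrow>
     (\<forall>\<phi>. bilin_on sv sw V W \<phi> \<longrightarrow> (\<Sum>(a,b)\<leftarrow>xs. \<phi> a b) = (\<Sum>(a,b)\<leftarrow>ys. \<phi> a b))"

definition trilin_on ::
  "('k::field \<Rightarrow> 'u::ab_group_add \<Rightarrow> 'u) \<Rightarrow> ('k \<Rightarrow> 'v::ab_group_add \<Rightarrow> 'v) \<Rightarrow> ('k \<Rightarrow> 'w::ab_group_add \<Rightarrow> 'w) \<Rightarrow>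
     'u set \<Rightarrow> 'v set \<Rightarrow> 'w set \<Rightarrow> ('u \<Rightarrow> 'v \<Rightarrow> 'w \<Rightarrow> 'k) \<Rightarrow> bool" where
  "trilin_on su sv sw U V W \<phi> \<longleftrightarrow>
     (\<forall>a\<in>U. \<forall>a'\<in>U. \<forall>b\<in>V. \<forall>d\<in>W. \<phi> (a + a') b d = \<phi> a b d + \<phi> a' b d) \<and>
     (\<forall>a\<in>U. \<forall>b\<in>V. \<forall>b'\<in>V. \<forall>d\<in>W. \<phi> a (b + b') d = \<phi> a b d + \<phi> a b' d) \<and>
     (\<forall>a\<in>U. \<forall>b\<in>V. \<forall>d\<in>W. \<forall>d'\<in>W. \<phi> a b (d + d') = \<phi> a b d + \<phi> a b d') \<and>
     (\<forall>c. \<forall>a\<in>U. \<forall>b\<in>V. \<forall>d\<in>W.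
        \<phi> (su c a) b d = c * \<phi> a b d \<and> \<phi> a (sv c b) d = c * \<phi> a b d \<and> \<phi> a b (sw c d) = c * \<phi> a b d)"

definition tensor3_eq ::
  "('k::field \<Rightarrow> 'u::ab_group_add \<Rightarrow> 'u) \<Rightarrow> ('k \<Rightarrow> 'v::ab_group_add \<Rightarrow> 'v) \<Rightarrow> ('k \<Rightarrow> 'w::ab_group_add \<Rightarrow> 'w) \<Rightarrow>
     'u set \<Rightarrow> 'v set \<Rightarrow> 'w set \<Rightarrow> ('u \<times> 'v \<times> 'w) list \<Rightarrow> ('u \<times> 'v \<times> 'w) list \<Rightarrow> bool" where
  "tensor3_eq su sv sw U V W xs ys \<longleftrightarrow>
     (\<forall>\<phi>. trilin_on su sv sw U V W \<phi> \<longrightarrow>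
        (\<Sum>(a,b,d)\<leftarrow>xs. \<phi> a b d) = (\<Sum>(a,b,d)\<leftarrow>ys. \<phi> a b d))"

text \<open>Equality in the balanced tensor product V (x)_R W, where V, W, R are
  subsets of one algebra and R acts by the algebra multiplication.\<close>
definition btensor_eq ::
  "('k::field \<Rightarrow> 'a::ring \<Rightarrow> 'a) \<Rightarrow> 'a set \<Rightarrow> 'a set \<Rightarrow> 'a set \<Rightarrow> ('a \<times> 'a) list \<Rightarrow> ('a \<times> 'a) list \<Rightarrow> bool" where
  "btensor_eq sc V W R xs ys \<longleftrightarrow>
     (\<forall>\<phi>. bilin_on sc sc V W \<phi> \<and> (\<forall>a\<in>V. \<forall>r\<in>R. \<forall>b\<in>W. \<phi> (a * r) b = \<phi> a (r * b)) \<longrightarrow>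
        (\<Sum>(a,b)\<leftarrow>xs. \<phi> a b) = (\<Sum>(a,b)\<leftarrow>ys. \<phi> a b))"

definition tprod :: "('a::times \<times> 'b::times) list \<Rightarrow> ('a \<times> 'b) list \<Rightarrow> ('a \<times> 'b) list" where
  "tprod xs ys = [(fst p * fst q, snd p * snd q). p \<leftarrow> xs, q \<leftarrow> ys]"

definition algebra_over :: "('k::field \<Rightarrow> 'a::ring \<Rightarrow> 'a) \<Rightarrow> bool" where
  "algebra_over sc \<longleftrightarrow> vector_space sc \<and>
     (\<forall>c x y. sc c (x * y) = sc c x * y \<and> sc c (x * y) = x * sc c y)"

definition hopf_algebra ::
  "('k::field \<Rightarrow> 'h::ring_1 \<Rightarrow> 'h) \<Rightarrow> ('h \<Rightarrow> ('h \<times> 'h) list) \<Rightarrow> ('h \<Rightarrow> 'k) \<Rightarrow> ('h \<Rightarrow> 'h) \<Rightarrow> bool" where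
  "hopf_algebra sc \<Delta> \<epsilon> S \<longleftrightarrow>
     algebra_over sc \<and>
     (\<forall>h g. tensor_eq sc sc UNIV UNIV (\<Delta> (h + g)) (\<Delta> h @ \<Delta> g)) \<and>
     (\<forall>c h. tensor_eq sc sc UNIV UNIV (\<Delta> (sc c h)) (map (\<lambda>(x,y). (sc c x, y)) (\<Delta> h))) \<and>
     (\<forall>h g. tensor_eq sc sc UNIV UNIV (\<Delta> (h * g)) (tprod (\<Delta> h) (\<Delta> g))) \<and>
     tensor_eq sc sc UNIV UNIV (\<Delta> 1) [(1, 1)] \<and>
     (\<forall>h. tensor3_eq sc sc sc UNIV UNIV UNIV
        (concat (map (\<lambda>(x,y). map (\<lambda>(y1,y2). (x, y1, y2)) (\<Delta> y)) (\<Delta> h)))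
        (concat (map (\<lambda>(x,y). map (\<lambda>(x1,x2). (x1, x2, y)) (\<Delta> x)) (\<Delta> h)))) \<and>
     (\<forall>h g. \<epsilon> (h + g) = \<epsilon> h + \<epsilon> g) \<and> (\<forall>c h. \<epsilon> (sc c h) = c * \<epsilon> h) \<and>
     (\<forall>h g. \<epsilon> (h * g) = \<epsilon> h * \<epsilon> g) \<and> \<epsilon> 1 = 1 \<and>
     (\<forall>h. (\<Sum>(x,y)\<leftarrow>\<Delta> h. sc (\<epsilon> x) y) = h) \<and>
     (\<forall>h. (\<Sum>(x,y)\<leftarrow>\<Delta> h. sc (\<epsilon> y) x) = h) \<and>
     (\<forall>h g. S (h + g) = S h + S g) \<and> (\<forall>c h. S (sc c h) = sc c (S h)) \<and>
     (\<forall>h. (\<Sum>(x,y)\<leftarrow>\<Delta> h. S x * y) = sc (\<epsilon> h) 1) \<and>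
     (\<forall>h. (\<Sum>(x,y)\<leftarrow>\<Delta> h. x * S y) = sc (\<epsilon> h) 1)"

definition comodule_on ::
  "('k::field \<Rightarrow> 'a::ring \<Rightarrow> 'a) \<Rightarrow> ('k \<Rightarrow> 'h::ring_1 \<Rightarrow> 'h) \<Rightarrow> ('h \<Rightarrow> ('h \<times> 'h) list) \<Rightarrow> ('h \<Rightarrow> 'k) \<Rightarrow>
     'a set \<Rightarrow> ('a \<Rightarrow> ('a \<times> 'h) list) \<Rightarrow> bool" where
  "comodule_on scA scH \<Delta> \<epsilon> V \<gamma> \<longleftrightarrow>
     lsubspace scA V \<and>
     (\<forall>v\<in>V. set (\<gamma> v) \<subseteq> V \<times> UNIV) \<and>
     (\<forall>v\<in>V. \<forall>w\<in>V. tensor_eq scA scH V UNIV (\<gamma> (v + w)) (\<gamma> v @ \<gamma> w)) \<and>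
     (\<forall>c. \<forall>v\<in>V. tensor_eq scA scH V UNIV (\<gamma> (scA c v)) (map (\<lambda>(x,h). (scA c x, h)) (\<gamma> v))) \<and>
     (\<forall>v\<in>V. tensor3_eq scA scH scH V UNIV UNIV
        (concat (map (\<lambda>(x,h). map (\<lambda>(h1,h2). (x, h1, h2)) (\<Delta> h)) (\<gamma> v)))
        (concat (map (\<lambda>(x,h). map (\<lambda>(x1,h1). (x1, h1, h)) (\<gamma> x)) (\<gamma> v)))) \<and>
     (\<forall>v\<in>V. (\<Sum>(x,h)\<leftarrow>\<gamma> v. scA (\<epsilon> h) x) = v)"

definition comodule_algebra_on ::
  "('k::field \<Rightarrow> 'a::ring \<Rightarrow> 'a) \<Rightarrow> ('k \<Rightarrow> 'h::ring_1 \<Rightarrow> 'h) \<Rightarrow> ('h \<Rightarrow> ('h \<times> 'h) list) \<Rightarrow> ('h \<Rightarrow> 'k) \<Rightarrow>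
     'a set \<Rightarrow> ('a \<Rightarrow> ('a \<times> 'h) list) \<Rightarrow> bool" where
  "comodule_algebra_on scA scH \<Delta> \<epsilon> V \<gamma> \<longleftrightarrow>
     comodule_on scA scH \<Delta> \<epsilon> V \<gamma> \<and>
     (\<forall>v\<in>V. \<forall>w\<in>V. v * w \<in> V) \<and>
     (\<forall>v\<in>V. \<forall>w\<in>V. tensor_eq scA scH V UNIV (\<gamma> (v * w)) (tprod (\<gamma> v) (\<gamma> w)))"

definition coinv ::
  "('k::field \<Rightarrow> 'a::ring \<Rightarrow> 'a) \<Rightarrow> ('k \<Rightarrow> 'h::ring_1 \<Rightarrow> 'h) \<Rightarrow> 'a set \<Rightarrow> ('a \<Rightarrow> ('a \<times> 'h) list) \<Rightarrow> 'a set" where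
  "coinv scA scH V \<gamma> = {v \<in> V. tensor_eq scA scH V UNIV (\<gamma> v) [(v, 1)]}"

definition galois_map :: "('a::ring \<Rightarrow> ('a \<times> 'h) list) \<Rightarrow> ('a \<times> 'a) list \<Rightarrow> ('a \<times> 'h) list" where
  "galois_map \<gamma> xs = concat (map (\<lambda>(a,b). map (\<lambda>(c,h). (a * c, h)) (\<gamma> b)) xs)"

text \<open>(V, gamma) is a Galois coaction: comodule algebra whose Galois map
  V (x)_{V^gamma} V -> V (x) H is bijective.\<close>
definition galois_coaction ::
  "('k::field \<Rightarrow> 'a::ring \<Rightarrow> 'a) \<Rightarrow> ('k \<Rightarrow> 'h::ring_1 \<Rightarrow> 'h) \<Rightarrow> ('h \<Rightarrow> ('h \<times> 'h) list) \<Rightarrow> ('h \<Rightarrow> 'k) \<Rightarrow>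
     'a set \<Rightarrow> ('a \<Rightarrow> ('a \<times> 'h) list) \<Rightarrow> bool" where
  "galois_coaction scA scH \<Delta> \<epsilon> V \<gamma> \<longleftrightarrow>
     comodule_algebra_on scA scH \<Delta> \<epsilon> V \<gamma> \<and>
     (\<forall>xs\<in>lists (V \<times> V). \<forall>ys\<in>lists (V \<times> V).
        tensor_eq scA scH V UNIV (galois_map \<gamma> xs) (galois_map \<gamma> ys) \<longrightarrow>
        btensor_eq scA V V (coinv scA scH V \<gamma>) xs ys) \<and>
     (\<forall>zs\<in>lists (V \<times> (UNIV::'h set)). \<exists>xs\<in>lists (V \<times> V).
        tensor_eq scA scH V UNIV (galois_map \<gamma> xs) zs)"

definition coinv_local_units ::
  "('k::field \<Rightarrow> 'a::ring \<Rightarrow> 'a) \<Rightarrow> ('k \<Rightarrow> 'h::ring_1 \<Rightarrow> 'h) \<Rightarrow> ('a \<Rightarrow> ('a \<times> 'h) list) \<Rightarrow> bool" where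
  "coinv_local_units scA scH \<alpha> \<longleftrightarrow>
     (\<forall>F. finite F \<longrightarrow> (\<exists>e\<in>coinv scA scH UNIV \<alpha>. e * e = e \<and> (\<forall>a\<in>F. e * a = a \<and> a * e = a)))"

definition multiplier_on :: "('k::field \<Rightarrow> 'a::ring \<Rightarrow> 'a) \<Rightarrow> 'a set \<Rightarrow> ('a \<Rightarrow> 'a) \<Rightarrow> ('a \<Rightarrow> 'a) \<Rightarrow> bool" where
  "multiplier_on sc D l r \<longleftrightarrow>
     (\<forall>x\<in>D. l x \<in> D \<and> r x \<in> D) \<and>
     (\<forall>x\<in>D. \<forall>y\<in>D. l (x + y) = l x + l y \<and> r (x + y) = r x + r y) \<and>
     (\<forall>c. \<forall>x\<in>D. l (sc c x) = sc c (l x) \<and> r (sc c x) = sc c (r x)) \<and>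
     (\<forall>x\<in>D. \<forall>y\<in>D. l (x * y) = l x * y \<and> r (x * y) = x * r y \<and> x * l y = r x * y)"

definition idempotent_multiplier :: "'a set \<Rightarrow> ('a \<Rightarrow> 'a) \<Rightarrow> ('a \<Rightarrow> 'a) \<Rightarrow> bool" where
  "idempotent_multiplier D l r \<longleftrightarrow> (\<forall>x\<in>D. l (l x) = l x \<and> r (r x) = r x)"

text \<open>Extension of a multiplier of the coinvariant subalgebra R to a multiplier
  of A (the inclusion M(A^alpha) into M(A)) using coinvariant local units:
  p a = (p e) a for e in R with e a = a, and a p = a (e p) for a e = a.\<close>
definition mext_l :: "'a::ring set \<Rightarrow> ('a \<Rightarrow> 'a) \<Rightarrow> 'a \<Rightarrow> 'a" where
  "mext_l R l a = l (SOME e. e \<in> R \<and> e * a = a) * a"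

definition mext_r :: "'a::ring set \<Rightarrow> ('a \<Rightarrow> 'a) \<Rightarrow> 'a \<Rightarrow> 'a" where
  "mext_r R r a = a * r (SOME e. e \<in> R \<and> a * e = a)"

text \<open>An H-equivariant strict Morita context whose four spaces Sp i j
  (i, j in {1,2}) are subspaces of one algebra 'a, with pairings given by the
  multiplication of 'a, and coactions gam i j.\<close>
definition strict_equivariant_morita_context ::
  "('k::field \<Rightarrow> 'a::ring \<Rightarrow> 'a) \<Rightarrow> ('k \<Rightarrow> 'h::ring_1 \<Rightarrow> 'h) \<Rightarrow> ('h \<Rightarrow> ('h \<times> 'h) list) \<Rightarrow> ('h \<Rightarrow> 'k) \<Rightarrow>
     (nat \<Rightarrow> nat \<Rightarrow> 'a set) \<Rightarrow> (nat \<Rightarrow> nat \<Rightarrow> 'a \<Rightarrow> ('a \<times> 'h) list) \<Rightarrow> bool" where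
  "strict_equivariant_morita_context scA scH \<Delta> \<epsilon> Sp gam \<longleftrightarrow>
     (\<forall>i\<in>{1,2}. \<forall>j\<in>{1,2}. comodule_on scA scH \<Delta> \<epsilon> (Sp i j) (gam i j)) \<and>
     (\<forall>i\<in>{1,2}. \<forall>j\<in>{1,2}. \<forall>l\<in>{1,2}. \<forall>x\<in>Sp i j. \<forall>y\<in>Sp j l.
        x * y \<in> Sp i l \<and>
        tensor_eq scA scH (Sp i l) UNIV (gam i l (x * y)) (tprod (gam i j x) (gam j l y))) \<and>
     (\<forall>i\<in>{1,2}. \<forall>j\<in>{1,2}.
        (\<forall>xs\<in>lists (Sp i j \<times> Sp j i). \<forall>ys\<in>lists (Sp i j \<times> Sp j i).
           (\<Sum>(x,y)\<leftarrow>xs. x * y) = (\<Sum>(x,y)\<leftarrow>ys. x * y) \<longrightarrow>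
           btensor_eq scA (Sp i j) (Sp j i) (Sp j j) xs ys) \<and>
        (\<forall>z\<in>Sp i i. \<exists>xs\<in>lists (Sp i j \<times> Sp j i). (\<Sum>(x,y)\<leftarrow>xs. x * y) = z))"

text \<open>The context (A p, p A) between B = p A p (index 1) and A (index 2):
  A_11 = B, A_12 = pA, A_21 = Ap, A_22 = A.\<close>
definition corner_context :: "'a set \<Rightarrow> 'a set \<Rightarrow> 'a set \<Rightarrow> nat \<Rightarrow> nat \<Rightarrow> 'a set" where
  "corner_context B pA Ap i j =
     (if i = 1 \<and> j = 1 then B else if i = 1 then pA else if j = 1 then Ap else UNIV)"

end

theory Submission
  imports Defs
begin

text \<open>
  Left and right multiplication by $p$, and hence $a \mapsto pap$, are idempotent
  linear maps of $A$ that commute with the coaction, so $\alpha$ restricts to $pA$,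
  $Ap$ and $B = pAp$, and the four corners are closed under the products of the
  context.  Everything else rests on fullness $A^\alpha p A^\alpha = A^\alpha$, which
  writes each coinvariant local unit as $e = \sum_k r_k\, p\, s_k$ with $r_k, s_k$
  coinvariant.  Inserting such a decomposition moves a preimage under the Galois map
  of $A$ into $B \otimes B$; it factors every $x \in Ap$ as $\sum_k (r_k p)(p s_k x)$,
  which gives surjectivity of $Ap \otimes pA \to A$ and injectivity of the pairings
  balanced over $B$; and it extends an $A^\alpha$-balanced form $\varphi$ on $B \times B$
  to the $A^\alpha$-balanced form $(a, c) \mapsto \sum_k \varphi(p a r_k p,\ p s_k c p)$
  on $A \times A$, through which injectivity of the Galois map passes from $A$ to $B$.
  The pairings balanced over $A$ only need a single coinvariant local unit.
\<close>

section \<open>Formal tensors\<close>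

lemma tensor_eqD:
  "tensor_eq sv sw V W xs ys \<Longrightarrow> bilin_on sv sw V W \<phi> \<Longrightarrow>
    (\<Sum>(a,b)\<leftarrow>xs. \<phi> a b) = (\<Sum>(a,b)\<leftarrow>ys. \<phi> a b)"
  unfolding tensor_eq_def by blast

lemma tensor_eq_refl: "tensor_eq sv sw V W xs xs"
  unfolding tensor_eq_def by blast

lemma tensor_eq_sym: "tensor_eq sv sw V W xs ys \<Longrightarrow> tensor_eq sv sw V W ys xs"
  unfolding tensor_eq_def by metis

lemma tensor_eq_trans:
  "tensor_eq sv sw V W xs ys \<Longrightarrow> tensor_eq sv sw V W ys zs \<Longrightarrow> tensor_eq sv sw V W xs zs"
  unfolding tensor_eq_def by metis

lemma bilin_on_subset:
  "bilin_on sv sw V' W' \<phi> \<Longrightarrow> V \<subseteq> V' \<Longrightarrow> W \<subseteq> W' \<Longrightarrow> bilin_on sv sw V W \<phi>"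
  unfolding bilin_on_def by blast

lemma tensor_eq_mono:
  "tensor_eq sv sw V W xs ys \<Longrightarrow> V \<subseteq> V' \<Longrightarrow> W \<subseteq> W' \<Longrightarrow> tensor_eq sv sw V' W' xs ys"
  unfolding tensor_eq_def using bilin_on_subset by blast

lemma sum_list_pairs_cong:
  "(\<And>a b. (a,b) \<in> set xs \<Longrightarrow> f a b = g a b) \<Longrightarrow> (\<Sum>(a,b)\<leftarrow>xs. f a b) = (\<Sum>(a,b)\<leftarrow>xs. g a b)"
  by (induct xs) auto

lemma sum_list_pairs_add:
  "(\<Sum>(a,b)\<leftarrow>xs. f a b + g a b) = (\<Sum>(a,b)\<leftarrow>xs. f a b) + (\<Sum>(a,b)\<leftarrow>xs. (g a b::'c::comm_monoid_add))"
  by (induct xs) (auto simp: add_ac)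

lemma sum_list_pairs_const_mult:
  "(\<Sum>(a,b)\<leftarrow>xs. (c::'c::semiring_0) * f a b) = c * (\<Sum>(a,b)\<leftarrow>xs. f a b)"
  by (induct xs) (auto simp: distrib_left)

lemma sum_list_pairs_mult_left:
  "a * (\<Sum>(r,s)\<leftarrow>ks. f r s) = (\<Sum>(r,s)\<leftarrow>ks. a * (f r s::'c::semiring_0))"
  by (induct ks) (auto simp: distrib_left)

lemma sum_list_pairs_mult_right:
  "(\<Sum>(r,s)\<leftarrow>ks. f r s) * a = (\<Sum>(r,s)\<leftarrow>ks. (f r s::'c::semiring_0) * a)"
  by (induct ks) (auto simp: distrib_right)

lemma sum_list_pairs_swap:
  "(\<Sum>(x,h)\<leftarrow>xs. \<Sum>(y,g)\<leftarrow>ys. f x h y g) = (\<Sum>(y,g)\<leftarrow>ys. \<Sum>(x,h)\<leftarrow>xs. (f x h y g::'c::comm_monoid_add))"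
  by (induct xs) (auto simp: sum_list_pairs_add[symmetric])

lemma sum_list_map_apfst: "(\<Sum>(a,b)\<leftarrow>map (apfst f) xs. \<phi> a b) = (\<Sum>(a,b)\<leftarrow>xs. \<phi> (f a) b)"
  by (induct xs) auto

lemma sum_list_concat_pairs:
  "(\<Sum>(a,b)\<leftarrow>concat (map f xs). \<phi> a b) = (\<Sum>p\<leftarrow>xs. \<Sum>(a,b)\<leftarrow>f p. \<phi> a b)"
  by (induct xs) auto

lemma sum_list_concat_triples:
  "(\<Sum>(a,b,d)\<leftarrow>concat (map f xs). \<phi> a b d) = (\<Sum>p\<leftarrow>xs. \<Sum>(a,b,d)\<leftarrow>f p. \<phi> a b d)"
  by (induct xs) auto

lemma sum_list_triples_const_last:
  "(\<Sum>(a,b,d)\<leftarrow>map (\<lambda>(x,g). (x,g,h)) xs. \<phi> a b d) = (\<Sum>(a,b)\<leftarrow>xs. \<phi> a b h)"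
  by (induct xs) auto

lemma sum_list_tprod:
  "(\<Sum>(a,b)\<leftarrow>tprod xs ys. \<phi> a b) = (\<Sum>(x,h)\<leftarrow>xs. \<Sum>(y,g)\<leftarrow>ys. \<phi> (x*y) (h*g))"
  unfolding tprod_def by (induct xs) (auto simp: case_prod_unfold o_def)

lemma sum_list_galois_map:
  "(\<Sum>(a,b)\<leftarrow>galois_map \<gamma> xs. \<phi> a b) = (\<Sum>(a,b)\<leftarrow>xs. \<Sum>(c,h)\<leftarrow>\<gamma> b. \<phi> (a*c) h)"
  unfolding galois_map_def by (induct xs) (auto simp: case_prod_unfold o_def)

lemma map_apfst_tprod:
  "(\<And>p q. p \<in> set xs \<Longrightarrow> q \<in> set ys \<Longrightarrow> \<pi> (fst p * fst q) = fst p * fst q)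
    \<Longrightarrow> map (apfst \<pi>) (tprod xs ys) = tprod xs ys"
  unfolding tprod_def by (induct xs) auto

lemma lsubspace_sum_list:
  "lsubspace sc V \<Longrightarrow> \<forall>(r,s)\<in>set ks. f r s \<in> V \<Longrightarrow> (\<Sum>(r,s)\<leftarrow>ks. f r s) \<in> V"
  unfolding lsubspace_def by (induct ks) auto

lemma bilin_on_sum_list_left:
  assumes "bilin_on sv sw V W \<phi>" "lsubspace sv V" "\<forall>(r,s)\<in>set ks. f r s \<in> V" "y \<in> W"
  shows "\<phi> (\<Sum>(r,s)\<leftarrow>ks. f r s) y = (\<Sum>(r,s)\<leftarrow>ks. \<phi> (f r s) y)"
  using assms(3)
proof (induct ks)
  case Nil
  have "\<phi> (0 + 0) y = \<phi> 0 y + \<phi> 0 y" using assms(1,2,4) unfolding bilin_on_def lsubspace_def by blast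
  then show ?case by (simp only: add_0 add_cancel_right_right list.map sum_list.Nil)
next
  case (Cons p ks)
  obtain r s where "p = (r,s)" by fastforce
  moreover have "(\<Sum>(r,s)\<leftarrow>ks. f r s) \<in> V" using lsubspace_sum_list[OF assms(2)] Cons(2) by auto
  ultimately show ?case using Cons assms(1,4) unfolding bilin_on_def by auto
qed

lemma bilin_on_sum_list_right:
  assumes "bilin_on sv sw V W \<phi>" "lsubspace sw W" "\<forall>(r,s)\<in>set ks. f r s \<in> W" "x \<in> V"
  shows "\<phi> x (\<Sum>(r,s)\<leftarrow>ks. f r s) = (\<Sum>(r,s)\<leftarrow>ks. \<phi> x (f r s))"
  using assms(3)
proof (induct ks)
  case Nil
  have "\<phi> x (0 + 0) = \<phi> x 0 + \<phi> x 0" using assms(1,2,4) unfolding bilin_on_def lsubspace_def by blast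
  then show ?case by (simp only: add_0 add_cancel_right_right list.map sum_list.Nil)
next
  case (Cons p ks)
  obtain r s where "p = (r,s)" by fastforce
  moreover have "(\<Sum>(r,s)\<leftarrow>ks. f r s) \<in> W" using lsubspace_sum_list[OF assms(2)] Cons(2) by auto
  ultimately show ?case using Cons assms(1,4) unfolding bilin_on_def by auto
qed

lemma sum_list_factor_through_mult:
  fixes F :: "'a::ring \<Rightarrow> 'b::ab_group_add"
  assumes V: "lsubspace sc V" and F: "\<forall>v\<in>V. \<forall>w\<in>V. F (v + w) = F v + F w"
    and zs: "\<forall>(x,y)\<in>set zs. x * y \<in> V \<and> \<phi> x y = F (x * y)"
  shows "(\<Sum>(x,y)\<leftarrow>zs. \<phi> x y) = F (\<Sum>(x,y)\<leftarrow>zs. x * y)"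
  using zs
proof (induct zs)
  case Nil
  have "F (0 + 0) = F 0 + F 0" using V F unfolding lsubspace_def by blast
  then show ?case by simp
next
  case (Cons p zs)
  obtain x y where p: "p = (x, y)" by fastforce
  have "(\<Sum>(x,y)\<leftarrow>zs. x * y) \<in> V" using lsubspace_sum_list[OF V, of zs "(*)"] Cons(2) by auto
  then show ?case using Cons F p by auto
qed

definition sc_linear :: "('k::field \<Rightarrow> 'a::ab_group_add \<Rightarrow> 'a) \<Rightarrow> ('a \<Rightarrow> 'a) \<Rightarrow> bool" where
  "sc_linear sc f \<longleftrightarrow> (\<forall>x y. f (x + y) = f x + f y) \<and> (\<forall>c x. f (sc c x) = sc c (f x))"

lemma sc_linear_zero: "sc_linear sc f \<Longrightarrow> f 0 = 0"
  unfolding sc_linear_def by (metis add_cancel_right_right add_0)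

lemma sc_linear_sum_list: "sc_linear sc f \<Longrightarrow> f (\<Sum>(a,b)\<leftarrow>xs. g a b) = (\<Sum>(a,b)\<leftarrow>xs. f (g a b))"
  by (induct xs) (auto simp: sc_linear_zero sc_linear_def)

lemma sc_linear_comp: "sc_linear sc f \<Longrightarrow> sc_linear sc g \<Longrightarrow> sc_linear sc (f \<circ> g)"
  unfolding sc_linear_def by simp

lemma lsubspace_range: "sc_linear sc \<pi> \<Longrightarrow> lsubspace sc (range \<pi>)"
  unfolding lsubspace_def
proof safe
  assume l: "sc_linear sc \<pi>"
  show "0 \<in> range \<pi>" using sc_linear_zero[OF l] by (metis rangeI)
  fix x y show "\<pi> x + \<pi> y \<in> range \<pi>" using l unfolding sc_linear_def by (metis rangeI)
  fix c show "sc c (\<pi> x) \<in> range \<pi>" using l unfolding sc_linear_def by (metis rangeI)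
qed

lemma tensor_eq_map_apfst:
  assumes "tensor_eq sv sw UNIV UNIV xs ys" "sc_linear sv f" "\<And>x. f x \<in> V"
  shows "tensor_eq sv sw V UNIV (map (apfst f) xs) (map (apfst f) ys)"
  unfolding tensor_eq_def sum_list_map_apfst
proof safe
  fix \<phi> assume "bilin_on sv sw V UNIV \<phi>"
  then have "bilin_on sv sw UNIV UNIV (\<lambda>a b. \<phi> (f a) b)"
    using assms(2,3) unfolding bilin_on_def sc_linear_def by simp
  then show "(\<Sum>(a,b)\<leftarrow>xs. \<phi> (f a) b) = (\<Sum>(a,b)\<leftarrow>ys. \<phi> (f a) b)"
    using assms(1) tensor_eqD by blast
qed

lemma algebra_overD:
  assumes "algebra_over sa"
  shows "sa c x * y = sa c (x * y)" "x * sa c y = sa c (x * y)" "vector_space sa"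
  using assms unfolding algebra_over_def by metis+

lemma tensor_eq_tprod_left:
  assumes "tensor_eq sa sh UNIV UNIV xs xs'" "algebra_over sa" "algebra_over sh"
  shows "tensor_eq sa sh UNIV UNIV (tprod xs ys) (tprod xs' ys)"
  unfolding tensor_eq_def sum_list_tprod
proof safe
  fix \<phi> assume "bilin_on sa sh UNIV UNIV \<phi>"
  then have "bilin_on sa sh UNIV UNIV (\<lambda>x h. \<Sum>(y,g)\<leftarrow>ys. \<phi> (x*y) (h*g))"
    using assms(2,3) unfolding bilin_on_def
    by (simp add: algebra_overD distrib_right sum_list_pairs_add sum_list_pairs_const_mult)
  then show "(\<Sum>(x,h)\<leftarrow>xs. \<Sum>(y,g)\<leftarrow>ys. \<phi> (x*y) (h*g)) = (\<Sum>(x,h)\<leftarrow>xs'. \<Sum>(y,g)\<leftarrow>ys. \<phi> (x*y) (h*g))"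
    using assms(1) tensor_eqD by blast
qed

lemma tensor_eq_tprod_right:
  assumes "tensor_eq sa sh UNIV UNIV ys ys'" "algebra_over sa" "algebra_over sh"
  shows "tensor_eq sa sh UNIV UNIV (tprod xs ys) (tprod xs ys')"
  unfolding tensor_eq_def sum_list_tprod
proof safe
  fix \<phi> assume "bilin_on sa sh UNIV UNIV \<phi>"
  then have "bilin_on sa sh UNIV UNIV (\<lambda>y g. \<Sum>(x,h)\<leftarrow>xs. \<phi> (x*y) (h*g))"
    using assms(2,3) unfolding bilin_on_def
    by (simp add: algebra_overD distrib_left sum_list_pairs_add sum_list_pairs_const_mult)
  then show "(\<Sum>(x,h)\<leftarrow>xs. \<Sum>(y,g)\<leftarrow>ys. \<phi> (x*y) (h*g)) = (\<Sum>(x,h)\<leftarrow>xs. \<Sum>(y,g)\<leftarrow>ys'. \<phi> (x*y) (h*g))"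
    using assms(1) tensor_eqD by (subst (1 2) sum_list_pairs_swap) blast
qed

lemma tensor_eq_galois_map:
  assumes "algebra_over sa" and "\<And>a b. (a,b) \<in> set xs \<Longrightarrow> tensor_eq sa sh UNIV UNIV (\<gamma> b) (\<gamma>' b)"
  shows "tensor_eq sa sh UNIV UNIV (galois_map \<gamma> xs) (galois_map \<gamma>' xs)"
  unfolding tensor_eq_def sum_list_galois_map
proof safe
  fix \<phi> assume "bilin_on sa sh UNIV UNIV \<phi>"
  then have "bilin_on sa sh UNIV UNIV (\<lambda>c h. \<phi> (a*c) h)" for a
    using assms(1) unfolding bilin_on_def by (simp add: algebra_overD distrib_left)
  then show "(\<Sum>(a,b)\<leftarrow>xs. \<Sum>(c,h)\<leftarrow>\<gamma> b. \<phi> (a*c) h) = (\<Sum>(a,b)\<leftarrow>xs. \<Sum>(c,h)\<leftarrow>\<gamma>' b. \<phi> (a*c) h)"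
    using assms(2) tensor_eqD by (intro sum_list_pairs_cong) blast
qed

section \<open>Multiplication by the idempotent\<close>

locale corner_setting =
  fixes scA :: "'k::field \<Rightarrow> 'a::ring \<Rightarrow> 'a"
    and scH :: "'k \<Rightarrow> 'h::ring_1 \<Rightarrow> 'h"
    and \<Delta> :: "'h \<Rightarrow> ('h \<times> 'h) list" and \<epsilon> :: "'h \<Rightarrow> 'k" and S :: "'h \<Rightarrow> 'h"
    and \<alpha> :: "'a \<Rightarrow> ('a \<times> 'h) list"
    and pl pr :: "'a \<Rightarrow> 'a"
  assumes hopf: "hopf_algebra scH \<Delta> \<epsilon> S"
    and alg: "algebra_over scA"
    and gal: "galois_coaction scA scH \<Delta> \<epsilon> UNIV \<alpha>"
    and lu: "coinv_local_units scA scH \<alpha>"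
    and mult: "multiplier_on scA (coinv scA scH UNIV \<alpha>) pl pr"
    and idem: "idempotent_multiplier (coinv scA scH UNIV \<alpha>) pl pr"
    and full: "module.span scA {x * pl y | x y. x \<in> coinv scA scH UNIV \<alpha> \<and> y \<in> coinv scA scH UNIV \<alpha>}
               = coinv scA scH UNIV \<alpha>"
begin

abbreviation "R \<equiv> coinv scA scH UNIV \<alpha>"
abbreviation "TE \<equiv> tensor_eq scA scH UNIV UNIV"
abbreviation "BL \<equiv> bilin_on scA scH UNIV UNIV"

abbreviation "lp \<equiv> mext_l R pl"
abbreviation "rp \<equiv> mext_r R pr"

lemma algebra_over_H: "algebra_over scH"
  using hopf unfolding hopf_algebra_def by blast

lemma scA_mult [simp]: "scA c x * y = scA c (x * y)" "x * scA c y = scA c (x * y)"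
  using algebra_overD[OF alg] by auto

lemma sc_linear_lmult: "sc_linear scA (\<lambda>x. a * x)"
  unfolding sc_linear_def by (simp add: distrib_left)

lemma sc_linear_id: "sc_linear scA id"
  unfolding sc_linear_def by simp

lemma comodule_algebra_alpha: "comodule_algebra_on scA scH \<Delta> \<epsilon> UNIV \<alpha>"
  using gal unfolding galois_coaction_def by blast

lemma alpha_add: "TE (\<alpha> (v + w)) (\<alpha> v @ \<alpha> w)"
  and alpha_scale: "TE (\<alpha> (scA c v)) (map (\<lambda>(x,h). (scA c x, h)) (\<alpha> v))"
  and alpha_coassoc: "tensor3_eq scA scH scH UNIV UNIV UNIV
        (concat (map (\<lambda>(x,h). map (\<lambda>(h1,h2). (x, h1, h2)) (\<Delta> h)) (\<alpha> v)))
        (concat (map (\<lambda>(x,h). map (\<lambda>(x1,h1). (x1, h1, h)) (\<alpha> x)) (\<alpha> v)))"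
  and alpha_counit: "(\<Sum>(x,h)\<leftarrow>\<alpha> v. scA (\<epsilon> h) x) = v"
  and alpha_mult: "TE (\<alpha> (v * w)) (tprod (\<alpha> v) (\<alpha> w))"
  using comodule_algebra_alpha unfolding comodule_algebra_on_def comodule_on_def by blast+

lemma galois_map_alpha_inj:
  "TE (galois_map \<alpha> xs) (galois_map \<alpha> ys) \<Longrightarrow> btensor_eq scA UNIV UNIV R xs ys"
  using gal unfolding galois_coaction_def by (simp add: lists_UNIV)

lemma galois_map_alpha_surj: "\<exists>xs. TE (galois_map \<alpha> xs) zs"
  using gal unfolding galois_coaction_def by (simp add: lists_UNIV)

lemma coinv_iff: "r \<in> R \<longleftrightarrow> TE (\<alpha> r) [(r,1)]"
  unfolding coinv_def by simp

lemma tensor_eq_map_linear: "TE xs ys \<Longrightarrow> sc_linear scA f \<Longrightarrow> TE (map (apfst f) xs) (map (apfst f) ys)"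
  using tensor_eq_map_apfst[of scA scH xs ys f UNIV] by simp

lemma alpha_coinv_mult_left: "r \<in> R \<Longrightarrow> TE (\<alpha> (r * a)) (map (apfst (\<lambda>x. r * x)) (\<alpha> a))"
proof -
  assume "r \<in> R"
  then have "TE (tprod (\<alpha> r) (\<alpha> a)) (tprod [(r,1)] (\<alpha> a))"
    using tensor_eq_tprod_left[OF _ alg algebra_over_H] coinv_iff by blast
  moreover have "tprod [(r, 1)] (\<alpha> a) = map (apfst (\<lambda>x. r * x)) (\<alpha> a)"
    unfolding tprod_def by (induct "\<alpha> a") auto
  ultimately show ?thesis using tensor_eq_trans[OF alpha_mult] by metis
qed

lemma alpha_coinv_mult_right: "r \<in> R \<Longrightarrow> TE (\<alpha> (a * r)) (map (apfst (\<lambda>x. x * r)) (\<alpha> a))"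
proof -
  assume "r \<in> R"
  then have "TE (tprod (\<alpha> a) (\<alpha> r)) (tprod (\<alpha> a) [(r,1)])"
    using tensor_eq_tprod_right[OF _ alg algebra_over_H] coinv_iff by blast
  moreover have "tprod (\<alpha> a) [(r, 1)] = map (apfst (\<lambda>x. x * r)) (\<alpha> a)"
    unfolding tprod_def by (induct "\<alpha> a") auto
  ultimately show ?thesis using tensor_eq_trans[OF alpha_mult] by metis
qed

lemma coinv_scale: "r \<in> R \<Longrightarrow> scA c r \<in> R"
  unfolding coinv_iff tensor_eq_def
proof safe
  fix \<phi> assume r: "\<forall>\<phi>. BL \<phi> \<longrightarrow> (\<Sum>(a,b)\<leftarrow>\<alpha> r. \<phi> a b) = (\<Sum>(a,b)\<leftarrow>[(r,1)]. \<phi> a b)"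
    and b: "BL \<phi>"
  have "(\<Sum>(a,b)\<leftarrow>map (\<lambda>(x,h). (scA c x, h)) xs. \<phi> a b) = c * (\<Sum>(a,b)\<leftarrow>xs. \<phi> a b)" for xs
    using b unfolding bilin_on_def by (induct xs) (auto simp: algebra_simps)
  then have "(\<Sum>(a,b)\<leftarrow>\<alpha> (scA c r). \<phi> a b) = c * \<phi> r 1"
    using tensor_eqD[OF alpha_scale b] r b by simp
  also have "\<dots> = \<phi> (scA c r) 1" using b unfolding bilin_on_def by simp
  finally show "(\<Sum>(a,b)\<leftarrow>\<alpha> (scA c r). \<phi> a b) = (\<Sum>(a,b)\<leftarrow>[(scA c r,1)]. \<phi> a b)" by simp
qed

lemma coinv_mult: "r \<in> R \<Longrightarrow> s \<in> R \<Longrightarrow> r * s \<in> R"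
proof -
  assume r: "r \<in> R" and s: "s \<in> R"
  have "TE (map (apfst (\<lambda>x. r * x)) (\<alpha> s)) (map (apfst (\<lambda>x. r * x)) [(s,1)])"
    using tensor_eq_map_linear[OF _ sc_linear_lmult] s coinv_iff by blast
  then show ?thesis
    unfolding coinv_iff using tensor_eq_trans[OF alpha_coinv_mult_left[OF r]] by fastforce
qed

lemma coinv_local_unit: "finite F \<Longrightarrow> \<exists>e\<in>R. e * e = e \<and> (\<forall>a\<in>F. e * a = a \<and> a * e = a)"
  using lu unfolding coinv_local_units_def by blast

lemma coinv_unit: "\<exists>e\<in>R. e * a = a \<and> a * e = a"
  using coinv_local_unit[of "{a}"] by auto

definition coinv_decomp :: "'a \<Rightarrow> ('a \<times> 'a) list \<Rightarrow> bool" where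
  "coinv_decomp e ks \<longleftrightarrow> set ks \<subseteq> R \<times> R \<and> e = (\<Sum>(r,s)\<leftarrow>ks. r * pl s)"

lemma coinv_decomp_exists: assumes "e \<in> R" shows "\<exists>ks. coinv_decomp e ks"
proof -
  interpret vector_space scA using algebra_overD(3)[OF alg] .
  have "e \<in> span {x * pl y | x y. x \<in> R \<and> y \<in> R}" using full assms by simp
  then show ?thesis
    unfolding coinv_decomp_def
  proof (induct rule: span_induct_alt)
    case base
    show ?case by (rule exI[of _ "[]"]) simp
  next
    case (step c x y)
    then obtain a b ks where "x = a * pl b" "a \<in> R" "b \<in> R" "set ks \<subseteq> R \<times> R" "y = (\<Sum>(r,s)\<leftarrow>ks. r * pl s)"
      by blast
    then show ?case
      by (intro exI[of _ "(scA c a, b) # ks"]) (auto simp: coinv_scale)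
  qed
qed

lemma coinv_decomp_coinv: "coinv_decomp e ks \<Longrightarrow> (r, s) \<in> set ks \<Longrightarrow> r \<in> R \<and> s \<in> R"
  unfolding coinv_decomp_def by auto

lemma coinv_decomp_mult_left:
  assumes "r \<in> R" "coinv_decomp e ks"
  shows "coinv_decomp (r * e) (map (apfst (\<lambda>x. r * x)) ks)"
  using assms coinv_mult unfolding coinv_decomp_def sum_list_map_apfst
  by (auto simp: sum_list_pairs_mult_left mult.assoc)

lemma multiplier_closed: "x \<in> R \<Longrightarrow> pl x \<in> R" "x \<in> R \<Longrightarrow> pr x \<in> R"
  and multiplier_mult: "x \<in> R \<Longrightarrow> y \<in> R \<Longrightarrow> pl (x * y) = pl x * y"
    "x \<in> R \<Longrightarrow> y \<in> R \<Longrightarrow> pr (x * y) = x * pr y"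
    "x \<in> R \<Longrightarrow> y \<in> R \<Longrightarrow> x * pl y = pr x * y"
  using mult unfolding multiplier_on_def by blast+

lemma multiplier_idem: "x \<in> R \<Longrightarrow> pl (pl x) = pl x" "x \<in> R \<Longrightarrow> pr (pr x) = pr x"
  using idem unfolding idempotent_multiplier_def by blast+

lemma lp_eq_unit: assumes "e \<in> R" "e * a = a" shows "lp a = pl e * a"
proof -
  define e0 where "e0 = (SOME e. e \<in> R \<and> e * a = a)"
  have e0: "e0 \<in> R" "e0 * a = a"
    unfolding e0_def by (rule someI2_ex, use coinv_unit in blast, simp)+
  obtain f where f: "f \<in> R" "f * e0 = e0" "f * e = e" using coinv_local_unit[of "{e0,e}"] by auto
  have "pl e0 * a = pl f * a" by (metis e0 f(1,2) multiplier_mult(1) mult.assoc)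
  moreover have "pl e * a = pl f * a" by (metis assms f(1,3) multiplier_mult(1) mult.assoc)
  ultimately show ?thesis unfolding mext_l_def e0_def by simp
qed

lemma rp_eq_unit: assumes "e \<in> R" "a * e = a" shows "rp a = a * pr e"
proof -
  define e0 where "e0 = (SOME e. e \<in> R \<and> a * e = a)"
  have e0: "e0 \<in> R" "a * e0 = a"
    unfolding e0_def by (rule someI2_ex, use coinv_unit in blast, simp)+
  obtain f where f: "f \<in> R" "e0 * f = e0" "e * f = e" using coinv_local_unit[of "{e0,e}"] by auto
  have "a * pr e0 = a * pr f" by (metis e0 f(1,2) multiplier_mult(2) mult.assoc)
  moreover have "a * pr e = a * pr f" by (metis assms f(1,3) multiplier_mult(2) mult.assoc)
  ultimately show ?thesis unfolding mext_r_def e0_def by simp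
qed

lemma lp_mult: "lp (a * b) = lp a * b"
proof -
  obtain e where "e \<in> R" "e * a = a" using coinv_unit by blast
  then show ?thesis using lp_eq_unit[of e a] lp_eq_unit[of e "a*b"] by (simp add: mult.assoc[symmetric])
qed

lemma rp_mult: "rp (a * b) = a * rp b"
proof -
  obtain e where "e \<in> R" "b * e = b" using coinv_unit by blast
  then show ?thesis using rp_eq_unit[of e b] rp_eq_unit[of e "a*b"] by (simp add: mult.assoc)
qed

lemma sc_linear_lp: "sc_linear scA lp"
  unfolding sc_linear_def
proof safe
  fix x y
  obtain e where "e \<in> R" "e * x = x" "e * y = y" using coinv_local_unit[of "{x,y}"] by auto
  then show "lp (x + y) = lp x + lp y" using lp_eq_unit[of e] by (simp add: distrib_left)
next
  fix c x
  obtain e where "e \<in> R" "e * x = x" using coinv_unit by blast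
  then show "lp (scA c x) = scA c (lp x)" using lp_eq_unit[of e] by simp
qed

lemma sc_linear_rp: "sc_linear scA rp"
  unfolding sc_linear_def
proof safe
  fix x y
  obtain e where "e \<in> R" "x * e = x" "y * e = y" using coinv_local_unit[of "{x,y}"] by auto
  then show "rp (x + y) = rp x + rp y" using rp_eq_unit[of e] by (simp add: distrib_right)
next
  fix c x
  obtain e where "e \<in> R" "x * e = x" using coinv_unit by blast
  then show "rp (scA c x) = scA c (rp x)" using rp_eq_unit[of e] by simp
qed

lemma lp_coinv: "r \<in> R \<Longrightarrow> lp r = pl r"
  using lp_eq_unit coinv_unit multiplier_mult(1) by metis

lemma rp_coinv: "r \<in> R \<Longrightarrow> rp r = pr r"
  using rp_eq_unit coinv_unit multiplier_mult(2) by metis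

lemma lp_coinv_mult: "e \<in> R \<Longrightarrow> lp (e * x) = pl e * x"
  using lp_mult lp_coinv by simp

lemma rp_mult_coinv: "e \<in> R \<Longrightarrow> rp (x * e) = x * pr e"
  using rp_mult rp_coinv by simp

lemma lp_idem [simp]: "lp (lp a) = lp a"
proof -
  obtain e where e: "e \<in> R" "e * a = a" using coinv_unit by blast
  then show ?thesis
    using lp_eq_unit[OF e] lp_coinv_mult multiplier_closed(1) multiplier_idem(1) by simp
qed

lemma rp_idem [simp]: "rp (rp a) = rp a"
proof -
  obtain e where e: "e \<in> R" "a * e = a" using coinv_unit by blast
  then show ?thesis
    using rp_eq_unit[OF e] rp_mult_coinv multiplier_closed(2) multiplier_idem(2) by (simp add: mult.assoc)
qed

lemma lp_rp_commute: "lp (rp a) = rp (lp a)"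
proof -
  obtain f where f: "f \<in> R" "a * f = a" using coinv_unit by blast
  moreover have "lp a * f = lp a" using lp_mult f by metis
  ultimately show ?thesis using rp_eq_unit lp_mult by metis
qed

lemma mult_lp: "a * lp b = rp a * b"
proof -
  obtain e where e: "e \<in> R" "e * b = b" using coinv_unit by blast
  obtain f where f: "f \<in> R" "a * f = a" using coinv_unit by blast
  have "a * pl e * b = a * f * pl e * b" using f by simp
  also have "\<dots> = a * pr f * e * b" using multiplier_mult(3)[OF f(1) e(1)] by (simp add: mult.assoc)
  finally show ?thesis using lp_eq_unit[OF e] rp_eq_unit[OF f] e by (simp add: mult.assoc)
qed

definition ep :: "'a \<Rightarrow> 'a" where "ep a = lp (rp a)"

lemma ep_idem [simp]: "ep (ep a) = ep a"
  unfolding ep_def by (metis lp_rp_commute lp_idem rp_idem)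

lemma lp_ep [simp]: "lp (ep a) = ep a" and rp_ep [simp]: "rp (ep a) = ep a"
  unfolding ep_def by (metis lp_rp_commute lp_idem rp_idem)+

lemma sc_linear_ep: "sc_linear scA ep"
  using sc_linear_comp[OF sc_linear_lp sc_linear_rp] unfolding ep_def o_def by simp

lemma ep_mult_ep: "ep a * ep b = ep (a * lp b)"
proof -
  have "ep a * ep b = lp (rp a * lp (rp b))" unfolding ep_def by (simp add: lp_mult)
  also have "\<dots> = lp (rp a * rp b)" by (metis mult_lp rp_idem)
  finally show ?thesis unfolding ep_def by (simp add: rp_mult mult_lp)
qed

lemma ep_mult_ep_coinv: "s \<in> R \<Longrightarrow> ep a * ep (s * c) = ep (a * pl s * c)"
  using ep_mult_ep lp_coinv_mult by (simp add: mult.assoc)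

section \<open>Projections compatible with the coaction\<close>

lemma alpha_lp: "TE (\<alpha> (lp a)) (map (apfst lp) (\<alpha> a))"
proof -
  obtain e where e: "e \<in> R" "e * a = a" using coinv_unit by blast
  have "TE (\<alpha> (lp a)) (map (apfst (\<lambda>x. pl e * x)) (\<alpha> a))"
    using lp_eq_unit[OF e] alpha_coinv_mult_left[OF multiplier_closed(1)[OF e(1)]] by simp
  moreover have "TE (map (apfst lp) (\<alpha> a)) (map (apfst lp) (map (apfst (\<lambda>x. e * x)) (\<alpha> a)))"
    using tensor_eq_map_linear[OF alpha_coinv_mult_left[OF e(1), of a] sc_linear_lp] e(2) by simp
  moreover have "map (apfst lp) (map (apfst (\<lambda>x. e * x)) (\<alpha> a)) = map (apfst (\<lambda>x. pl e * x)) (\<alpha> a)"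
    using lp_coinv_mult[OF e(1)] by (simp add: apfst_def map_prod_def case_prod_unfold)
  ultimately show ?thesis using tensor_eq_trans tensor_eq_sym by metis
qed

lemma alpha_rp: "TE (\<alpha> (rp a)) (map (apfst rp) (\<alpha> a))"
proof -
  obtain e where e: "e \<in> R" "a * e = a" using coinv_unit by blast
  have "TE (\<alpha> (rp a)) (map (apfst (\<lambda>x. x * pr e)) (\<alpha> a))"
    using rp_eq_unit[OF e] alpha_coinv_mult_right[OF multiplier_closed(2)[OF e(1)]] by simp
  moreover have "TE (map (apfst rp) (\<alpha> a)) (map (apfst rp) (map (apfst (\<lambda>x. x * e)) (\<alpha> a)))"
    using tensor_eq_map_linear[OF alpha_coinv_mult_right[OF e(1), of a] sc_linear_rp] e(2) by simp
  moreover have "map (apfst rp) (map (apfst (\<lambda>x. x * e)) (\<alpha> a)) = map (apfst (\<lambda>x. x * pr e)) (\<alpha> a)"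
    using rp_mult_coinv[OF e(1)] by (simp add: apfst_def map_prod_def case_prod_unfold)
  ultimately show ?thesis using tensor_eq_trans tensor_eq_sym by metis
qed

definition coaction_projection :: "('a \<Rightarrow> 'a) \<Rightarrow> bool" where
  "coaction_projection \<pi> \<longleftrightarrow>
     sc_linear scA \<pi> \<and> (\<forall>a. \<pi> (\<pi> a) = \<pi> a) \<and> (\<forall>a. TE (\<alpha> (\<pi> a)) (map (apfst \<pi>) (\<alpha> a)))"

lemma coaction_projectionD:
  assumes "coaction_projection \<pi>"
  shows "sc_linear scA \<pi>" "\<pi> (\<pi> a) = \<pi> a" "TE (\<alpha> (\<pi> a)) (map (apfst \<pi>) (\<alpha> a))"
  using assms unfolding coaction_projection_def by auto

lemma coaction_projection_id: "coaction_projection id"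
  unfolding coaction_projection_def using sc_linear_id by (simp add: tensor_eq_refl)

lemma coaction_projection_lp: "coaction_projection lp"
  unfolding coaction_projection_def using sc_linear_lp alpha_lp by simp

lemma coaction_projection_rp: "coaction_projection rp"
  unfolding coaction_projection_def using sc_linear_rp alpha_rp by simp

lemma coaction_projection_ep: "coaction_projection ep"
proof -
  have map_ep: "map (apfst lp) (map (apfst rp) xs) = map (apfst ep) xs" for xs
    unfolding ep_def by (induct xs) auto
  have "TE (\<alpha> (ep a)) (map (apfst ep) (\<alpha> a))" for a
    using tensor_eq_trans[OF alpha_lp tensor_eq_map_linear[OF alpha_rp sc_linear_lp]]
    unfolding map_ep ep_def[symmetric] .
  then show ?thesis unfolding coaction_projection_def using sc_linear_ep by simp
qed

definition proj_coaction :: "('a \<Rightarrow> 'a) \<Rightarrow> 'a \<Rightarrow> ('a \<times> 'h) list" where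
  "proj_coaction \<pi> x = map (apfst \<pi>) (\<alpha> x)"

lemma coaction_projection_fix: "coaction_projection \<pi> \<Longrightarrow> v \<in> range \<pi> \<Longrightarrow> \<pi> v = v"
  using coaction_projectionD(2) by auto

lemma proj_coaction_eq_alpha:
  "coaction_projection \<pi> \<Longrightarrow> v \<in> range \<pi> \<Longrightarrow> TE (proj_coaction \<pi> v) (\<alpha> v)"
  unfolding proj_coaction_def using coaction_projectionD(3) coaction_projection_fix tensor_eq_sym by metis

lemma proj_coaction_coassoc:
  assumes g: "coaction_projection \<pi>"
  shows "tensor3_eq scA scH scH (range \<pi>) UNIV UNIV
      (concat (map (\<lambda>(x,h). map (\<lambda>(h1,h2). (x, h1, h2)) (\<Delta> h)) (proj_coaction \<pi> v)))
      (concat (map (\<lambda>(x,h). map (\<lambda>(x1,h1). (x1, h1, h)) (proj_coaction \<pi> x)) (proj_coaction \<pi> v)))"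
  unfolding tensor3_eq_def
proof safe
  fix \<phi> assume t: "trilin_on scA scH scH (range \<pi>) UNIV UNIV \<phi>"
  define \<phi>' where "\<phi>' a b d = \<phi> (\<pi> a) b d" for a b d
  have t': "trilin_on scA scH scH UNIV UNIV UNIV \<phi>'"
    using t coaction_projectionD(1)[OF g] unfolding trilin_on_def \<phi>'_def sc_linear_def by auto
  have inner: "(\<Sum>(a,b,d)\<leftarrow>map (\<lambda>(x1,h1). (x1, h1, h)) (proj_coaction \<pi> (\<pi> x)). \<phi> a b d)
     = (\<Sum>(a,b,d)\<leftarrow>map (\<lambda>(x1,h1). (x1, h1, h)) (\<alpha> x). \<phi>' a b d)" for x h
  proof -
    have "BL (\<lambda>a b. \<phi>' a b h)" using t' unfolding trilin_on_def bilin_on_def by auto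
    then have "(\<Sum>(a,b)\<leftarrow>\<alpha> (\<pi> x). \<phi>' a b h) = (\<Sum>(a,b)\<leftarrow>map (apfst \<pi>) (\<alpha> x). \<phi>' a b h)"
      using tensor_eqD[OF coaction_projectionD(3)[OF g]] by blast
    then show ?thesis
      unfolding proj_coaction_def \<phi>'_def sum_list_triples_const_last sum_list_map_apfst
      using coaction_projectionD(2)[OF g] by simp
  qed
  have "(\<Sum>(a,b,d)\<leftarrow>concat (map (\<lambda>(x,h). map (\<lambda>(h1,h2). (x, h1, h2)) (\<Delta> h)) (proj_coaction \<pi> v)). \<phi> a b d)
    = (\<Sum>(a,b,d)\<leftarrow>concat (map (\<lambda>(x,h). map (\<lambda>(h1,h2). (x, h1, h2)) (\<Delta> h)) (\<alpha> v)). \<phi>' a b d)"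
    unfolding sum_list_concat_triples proj_coaction_def \<phi>'_def by (simp add: comp_def case_prod_unfold)
  also have "\<dots> = (\<Sum>(a,b,d)\<leftarrow>concat (map (\<lambda>(x,h). map (\<lambda>(x1,h1). (x1, h1, h)) (\<alpha> x)) (\<alpha> v)). \<phi>' a b d)"
    using alpha_coassoc t' unfolding tensor3_eq_def by blast
  also have "\<dots> = (\<Sum>(a,b,d)\<leftarrow>concat (map (\<lambda>(x,h). map (\<lambda>(x1,h1). (x1, h1, h)) (proj_coaction \<pi> x))
                        (proj_coaction \<pi> v)). \<phi> a b d)"
    unfolding sum_list_concat_triples using inner unfolding proj_coaction_def
    by (simp add: comp_def case_prod_unfold)
  finally show "(\<Sum>(a,b,d)\<leftarrow>concat (map (\<lambda>(x,h). map (\<lambda>(h1,h2). (x, h1, h2)) (\<Delta> h)) (proj_coaction \<pi> v)). \<phi> a b d)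
    = (\<Sum>(a,b,d)\<leftarrow>concat (map (\<lambda>(x,h). map (\<lambda>(x1,h1). (x1, h1, h)) (proj_coaction \<pi> x))
                        (proj_coaction \<pi> v)). \<phi> a b d)" .
qed

lemma comodule_on_range:
  assumes g: "coaction_projection \<pi>"
  shows "comodule_on scA scH \<Delta> \<epsilon> (range \<pi>) (proj_coaction \<pi>)"
  unfolding comodule_on_def
proof (intro conjI ballI allI)
  have l: "sc_linear scA \<pi>" using coaction_projectionD(1)[OF g] .
  then show "lsubspace scA (range \<pi>)" by (rule lsubspace_range)
  have sc_map: "map (apfst \<pi>) (map (\<lambda>(x,h). (scA c x, h)) xs) = map (\<lambda>(x,h). (scA c x, h)) (map (apfst \<pi>) xs)"
    for c xs using l by (induct xs) (auto simp: sc_linear_def)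
  fix v assume v: "v \<in> range \<pi>"
  show "set (proj_coaction \<pi> v) \<subseteq> range \<pi> \<times> UNIV" unfolding proj_coaction_def by auto
  have "(\<Sum>(x,h)\<leftarrow>proj_coaction \<pi> v. scA (\<epsilon> h) x) = \<pi> (\<Sum>(x,h)\<leftarrow>\<alpha> v. scA (\<epsilon> h) x)"
    unfolding proj_coaction_def sum_list_map_apfst sc_linear_sum_list[OF l]
    using l unfolding sc_linear_def by simp
  then show "(\<Sum>(x,h)\<leftarrow>proj_coaction \<pi> v. scA (\<epsilon> h) x) = v"
    using alpha_counit coaction_projection_fix[OF g v] by simp
  show "tensor3_eq scA scH scH (range \<pi>) UNIV UNIV
      (concat (map (\<lambda>(x,h). map (\<lambda>(h1,h2). (x, h1, h2)) (\<Delta> h)) (proj_coaction \<pi> v)))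
      (concat (map (\<lambda>(x,h). map (\<lambda>(x1,h1). (x1, h1, h)) (proj_coaction \<pi> x)) (proj_coaction \<pi> v)))"
    by (rule proj_coaction_coassoc[OF g])
  fix w
  show "tensor_eq scA scH (range \<pi>) UNIV (proj_coaction \<pi> (v + w)) (proj_coaction \<pi> v @ proj_coaction \<pi> w)"
    using tensor_eq_map_apfst[OF alpha_add l, of "range \<pi>" v w] unfolding proj_coaction_def by simp
  fix c
  show "tensor_eq scA scH (range \<pi>) UNIV (proj_coaction \<pi> (scA c v))
          (map (\<lambda>(x,h). (scA c x, h)) (proj_coaction \<pi> v))"
    using tensor_eq_map_apfst[OF alpha_scale l, of "range \<pi>" c v] unfolding proj_coaction_def sc_map by simp
qed

lemma proj_coaction_mult:
  assumes g1: "coaction_projection \<pi>1" and g2: "coaction_projection \<pi>2" and g3: "coaction_projection \<pi>3"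
    and x: "x \<in> range \<pi>1" and y: "y \<in> range \<pi>2"
    and closed: "\<And>a b. \<pi>3 (\<pi>1 a * \<pi>2 b) = \<pi>1 a * \<pi>2 b"
  shows "tensor_eq scA scH (range \<pi>3) UNIV (proj_coaction \<pi>3 (x * y))
           (tprod (proj_coaction \<pi>1 x) (proj_coaction \<pi>2 y))"
proof -
  have "TE (tprod (\<alpha> x) (\<alpha> y)) (tprod (proj_coaction \<pi>1 x) (\<alpha> y))"
    using tensor_eq_tprod_left[OF tensor_eq_sym[OF proj_coaction_eq_alpha[OF g1 x]] alg algebra_over_H] .
  moreover have "TE (tprod (proj_coaction \<pi>1 x) (\<alpha> y)) (tprod (proj_coaction \<pi>1 x) (proj_coaction \<pi>2 y))"
    using tensor_eq_tprod_right[OF tensor_eq_sym[OF proj_coaction_eq_alpha[OF g2 y]] alg algebra_over_H] .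
  ultimately have "TE (\<alpha> (x * y)) (tprod (proj_coaction \<pi>1 x) (proj_coaction \<pi>2 y))"
    using alpha_mult tensor_eq_trans by metis
  from tensor_eq_map_apfst[OF this coaction_projectionD(1)[OF g3], of "range \<pi>3"]
  have "tensor_eq scA scH (range \<pi>3) UNIV (proj_coaction \<pi>3 (x*y))
          (map (apfst \<pi>3) (tprod (proj_coaction \<pi>1 x) (proj_coaction \<pi>2 y)))"
    unfolding proj_coaction_def by simp
  moreover have "map (apfst \<pi>3) (tprod (proj_coaction \<pi>1 x) (proj_coaction \<pi>2 y))
      = tprod (proj_coaction \<pi>1 x) (proj_coaction \<pi>2 y)"
    by (rule map_apfst_tprod) (auto simp: proj_coaction_def closed)
  ultimately show ?thesis by simp
qed

text \<open>Index 1 stands for $p$ and index 2 for the absent unit, so that the corners of the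
  context are $A_{ij} = p_i A p_j$.\<close>
definition lproj :: "nat \<Rightarrow> 'a \<Rightarrow> 'a" where "lproj i = (if i = 1 then lp else id)"
definition rproj :: "nat \<Rightarrow> 'a \<Rightarrow> 'a" where "rproj j = (if j = 1 then rp else id)"
definition cproj :: "nat \<Rightarrow> nat \<Rightarrow> 'a \<Rightarrow> 'a" where "cproj i j a = lproj i (rproj j a)"

abbreviation "corner i j \<equiv> range (cproj i j)"

lemma lproj_simps [simp]: "lproj 1 = lp" "lproj (Suc 0) = lp" "lproj 2 = id"
  and rproj_simps [simp]: "rproj 1 = rp" "rproj (Suc 0) = rp" "rproj 2 = id"
  unfolding lproj_def rproj_def by simp_all

lemma lproj_mult: "lproj i (a * b) = lproj i a * b"
  unfolding lproj_def by (simp add: lp_mult)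

lemma rproj_mult: "rproj j (a * b) = a * rproj j b"
  unfolding rproj_def by (simp add: rp_mult)

lemma lproj_rproj_commute: "lproj i (rproj j a) = rproj j (lproj i a)"
  unfolding lproj_def rproj_def by (simp add: lp_rp_commute)

lemma lproj_idem [simp]: "lproj i (lproj i a) = lproj i a"
  and rproj_idem [simp]: "rproj j (rproj j a) = rproj j a"
  unfolding lproj_def rproj_def by simp_all

lemma sc_linear_lproj: "sc_linear scA (lproj i)"
  unfolding lproj_def using sc_linear_lp sc_linear_id by auto

lemma mem_corner_iff: "x \<in> corner i j \<longleftrightarrow> lproj i x = x \<and> rproj j x = x"
proof
  assume "x \<in> corner i j"
  then obtain a where a: "x = lproj i (rproj j a)" unfolding cproj_def by auto
  then have "rproj j x = x" by (metis lproj_rproj_commute rproj_idem)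
  then show "lproj i x = x \<and> rproj j x = x" using a by simp
next
  assume "lproj i x = x \<and> rproj j x = x"
  then have "x = cproj i j x" unfolding cproj_def by simp
  then show "x \<in> corner i j" by (metis rangeI)
qed

lemma cproj_11: "cproj 1 1 = ep" and cproj_12: "cproj 1 2 = lp"
  and cproj_21: "cproj 2 1 = rp" and cproj_22: "cproj 2 2 = id"
  unfolding cproj_def ep_def by auto

lemma coaction_projection_cproj: "i \<in> {1,2} \<Longrightarrow> j \<in> {1,2} \<Longrightarrow> coaction_projection (cproj i j)"
  using coaction_projection_ep coaction_projection_lp coaction_projection_rp coaction_projection_id
    cproj_11 cproj_12 cproj_21 cproj_22 by auto

lemma lsubspace_corner: "i \<in> {1,2} \<Longrightarrow> j \<in> {1,2} \<Longrightarrow> lsubspace scA (corner i j)"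
  using lsubspace_range coaction_projectionD(1)[OF coaction_projection_cproj] by blast

lemma corner_mult: "x \<in> corner i j \<Longrightarrow> y \<in> corner j l \<Longrightarrow> x * y \<in> corner i l"
  unfolding mem_corner_iff by (metis lproj_mult rproj_mult)

lemma proj_coaction_corner_mult:
  assumes "i \<in> {1,2}" "j \<in> {1,2}" "l \<in> {1,2}" "x \<in> corner i j" "y \<in> corner j l"
  shows "tensor_eq scA scH (corner i l) UNIV (proj_coaction (cproj i l) (x * y))
           (tprod (proj_coaction (cproj i j) x) (proj_coaction (cproj j l) y))"
proof (rule proj_coaction_mult[OF coaction_projection_cproj coaction_projection_cproj coaction_projection_cproj])
  fix a b
  have "cproj i j a * cproj j l b \<in> corner i l" by (rule corner_mult) auto
  then show "cproj i l (cproj i j a * cproj j l b) = cproj i j a * cproj j l b"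
    unfolding mem_corner_iff cproj_def by simp
qed (use assms in auto)

section \<open>The Galois coaction on $pAp$\<close>

abbreviation "B \<equiv> range ep"

lemma ep_mult_mem: "ep a * ep b \<in> B"
  using ep_mult_ep by simp

lemma ep_sum_list: "ep (\<Sum>(r,s)\<leftarrow>ks. f r s) = (\<Sum>(r,s)\<leftarrow>ks. ep (f r s))"
  by (rule sc_linear_sum_list[OF sc_linear_ep])

lemma lsubspace_B: "lsubspace scA B"
  by (rule lsubspace_range[OF sc_linear_ep])

lemma ep_coinv: "r \<in> R \<Longrightarrow> ep r \<in> coinv scA scH B (proj_coaction ep)"
proof -
  assume "r \<in> R"
  then have "TE (\<alpha> (ep r)) (map (apfst ep) [(r,1)])"
    using tensor_eq_trans[OF coaction_projectionD(3)[OF coaction_projection_ep]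
        tensor_eq_map_linear[OF iffD1[OF coinv_iff] sc_linear_ep]] by blast
  from tensor_eq_map_apfst[OF this sc_linear_ep, of B]
  show ?thesis unfolding coinv_def proj_coaction_def by simp
qed

definition unit_for :: "'a \<Rightarrow> 'a \<Rightarrow> 'a" where
  "unit_for a c = (SOME e. e \<in> R \<and> a * e = a \<and> e * c = c)"

definition decomp :: "'a \<Rightarrow> ('a \<times> 'a) list" where
  "decomp e = (SOME ks. coinv_decomp e ks)"

lemma unit_for: "unit_for a c \<in> R \<and> a * unit_for a c = a \<and> unit_for a c * c = c"
proof -
  have "\<exists>e. e \<in> R \<and> a * e = a \<and> e * c = c" using coinv_local_unit[of "{a,c}"] by auto
  from someI_ex[OF this] show ?thesis unfolding unit_for_def .
qed

lemma coinv_decomp_decomp: "e \<in> R \<Longrightarrow> coinv_decomp e (decomp e)"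
  unfolding decomp_def using coinv_decomp_exists someI_ex by metis

text \<open>With $e = \sum_k r_k p s_k$, a form $\varphi$ on $B$ extends to $A$ by
  $(a, c) \mapsto \sum_k \varphi(p a r_k p,\ p s_k c p)$ for any such $e$ that is a
  right unit for $a$ or a left unit for $c$.\<close>
definition ext_sum :: "('a \<Rightarrow> 'a \<Rightarrow> 'k) \<Rightarrow> 'a \<Rightarrow> 'a \<Rightarrow> ('a \<times> 'a) list \<Rightarrow> 'k" where
  "ext_sum \<phi> a c ks = (\<Sum>(r,s)\<leftarrow>ks. \<phi> (ep (a*r)) (ep (s*c)))"

definition form_ext :: "('a \<Rightarrow> 'a \<Rightarrow> 'k) \<Rightarrow> 'a \<Rightarrow> 'a \<Rightarrow> 'k" where
  "form_ext \<phi> a c = ext_sum \<phi> a c (decomp (unit_for a c))"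

context
  fixes \<phi> :: "'a \<Rightarrow> 'a \<Rightarrow> 'k"
  assumes bil: "bilin_on scA scA B B \<phi>"
    and bal: "\<And>a r b. r \<in> R \<Longrightarrow> \<phi> (ep a * ep r) (ep b) = \<phi> (ep a) (ep r * ep b)"
begin

text \<open>Both sides equal $\sum_{u,v} \sum_{r,s} \varphi(p a u p,\ p v r p s c p)$.\<close>
lemma ext_sum_exchange:
  assumes ks: "coinv_decomp e ks" and gs: "coinv_decomp g gs"
  shows "(\<Sum>(r,s)\<leftarrow>ks. \<phi> (ep (a*g*r)) (ep (s*c))) = (\<Sum>(u,v)\<leftarrow>gs. \<phi> (ep (a*u)) (ep (v*e*c)))"
proof -
  have expand: "\<phi> (ep (a*g*r)) (ep (s*c)) = (\<Sum>(u,v)\<leftarrow>gs. \<phi> (ep (a*u)) (ep (v*r*pl s*c)))"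
    if rs: "r \<in> R" "s \<in> R" for r s
  proof -
    have "a*g*r = (\<Sum>(u,v)\<leftarrow>gs. a*u*pl v*r)"
      using gs unfolding coinv_decomp_def
      by (simp add: sum_list_pairs_mult_left sum_list_pairs_mult_right mult.assoc)
    then have "ep (a*g*r) = (\<Sum>(u,v)\<leftarrow>gs. ep (a*u*pl v*r))"
      by (simp add: ep_sum_list)
    also have "\<dots> = (\<Sum>(u,v)\<leftarrow>gs. ep (a*u) * ep (v*r))"
      using coinv_decomp_coinv[OF gs] by (intro sum_list_pairs_cong ep_mult_ep_coinv[symmetric]) blast
    finally have "ep (a*g*r) = (\<Sum>(u,v)\<leftarrow>gs. ep (a*u) * ep (v*r))" .
    then have "\<phi> (ep (a*g*r)) (ep (s*c)) = (\<Sum>(u,v)\<leftarrow>gs. \<phi> (ep (a*u) * ep (v*r)) (ep (s*c)))"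
      using bilin_on_sum_list_left[OF bil lsubspace_B, of gs "\<lambda>u v. ep (a*u) * ep (v*r)"] ep_mult_mem
      by auto
    also have "\<dots> = (\<Sum>(u,v)\<leftarrow>gs. \<phi> (ep (a*u)) (ep (v*r) * ep (s*c)))"
    proof (rule sum_list_pairs_cong)
      fix u v assume "(u,v) \<in> set gs"
      then have "v * r \<in> R" using coinv_decomp_coinv[OF gs] coinv_mult rs(1) by blast
      then show "\<phi> (ep (a*u) * ep (v*r)) (ep (s*c)) = \<phi> (ep (a*u)) (ep (v*r) * ep (s*c))" by (rule bal)
    qed
    finally show ?thesis using ep_mult_ep_coinv[OF rs(2)] by (simp add: mult.assoc)
  qed
  have "(\<Sum>(r,s)\<leftarrow>ks. \<phi> (ep (a*g*r)) (ep (s*c)))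
      = (\<Sum>(r,s)\<leftarrow>ks. \<Sum>(u,v)\<leftarrow>gs. \<phi> (ep (a*u)) (ep (v*r*pl s*c)))"
    using coinv_decomp_coinv[OF ks] by (intro sum_list_pairs_cong expand) auto
  also have "\<dots> = (\<Sum>(u,v)\<leftarrow>gs. \<Sum>(r,s)\<leftarrow>ks. \<phi> (ep (a*u)) (ep (v*r*pl s*c)))"
    by (rule sum_list_pairs_swap)
  also have "\<dots> = (\<Sum>(u,v)\<leftarrow>gs. \<phi> (ep (a*u)) (\<Sum>(r,s)\<leftarrow>ks. ep (v*r*pl s*c)))"
    using bilin_on_sum_list_right[OF bil lsubspace_B, of ks] by auto
  also have "\<dots> = (\<Sum>(u,v)\<leftarrow>gs. \<phi> (ep (a*u)) (ep (v*e*c)))"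
    using ks unfolding coinv_decomp_def ep_sum_list[symmetric]
    by (simp add: sum_list_pairs_mult_left sum_list_pairs_mult_right mult.assoc)
  finally show ?thesis .
qed

lemma form_ext_right_unit:
  assumes e: "e \<in> R" "a * e = a" "coinv_decomp e ks"
  shows "form_ext \<phi> a c = ext_sum \<phi> a c ks"
proof -
  let ?e = "unit_for a c"
  have "coinv_decomp ?e (decomp ?e)" using coinv_decomp_decomp unit_for by blast
  from ext_sum_exchange[OF this e(3), of a c] show ?thesis
    unfolding form_ext_def ext_sum_def using e(2) unit_for by (simp add: mult.assoc)
qed

lemma form_ext_left_unit:
  assumes e: "e \<in> R" "e * c = c" "coinv_decomp e ks"
  shows "form_ext \<phi> a c = ext_sum \<phi> a c ks"
proof -
  let ?e = "unit_for a c"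
  have "coinv_decomp ?e (decomp ?e)" using coinv_decomp_decomp unit_for by blast
  from ext_sum_exchange[OF e(3) this, of a c] show ?thesis
    unfolding form_ext_def ext_sum_def using e(2) unit_for by (simp add: mult.assoc)
qed

lemma bilin_on_form_ext: "bilin_on scA scA UNIV UNIV (form_ext \<phi>)"
proof -
  have ep_add: "ep (x + y) = ep x + ep y" and ep_scale: "ep (scA k x) = scA k (ep x)" for x y k
    using sc_linear_ep unfolding sc_linear_def by auto
  note bil' = bil[unfolded bilin_on_def]
  show ?thesis
    unfolding bilin_on_def
  proof (intro conjI ballI allI)
    fix a a' c :: 'a
    obtain e where e: "e \<in> R" "a * e = a" "a' * e = a'" "(a + a') * e = a + a'"
      using coinv_local_unit[of "{a,a',a+a'}"] by auto
    obtain ks where ks: "coinv_decomp e ks" using coinv_decomp_decomp e(1) by blast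
    show "form_ext \<phi> (a + a') c = form_ext \<phi> a c + form_ext \<phi> a' c"
      unfolding form_ext_right_unit[OF e(1,2) ks] form_ext_right_unit[OF e(1,3) ks]
        form_ext_right_unit[OF e(1,4) ks] ext_sum_def
      using bil' by (simp add: distrib_right ep_add sum_list_pairs_add)
  next
    fix a c c' :: 'a
    obtain e where e: "e \<in> R" "e * c = c" "e * c' = c'" "e * (c + c') = c + c'"
      using coinv_local_unit[of "{c,c',c+c'}"] by auto
    obtain ks where ks: "coinv_decomp e ks" using coinv_decomp_decomp e(1) by blast
    show "form_ext \<phi> a (c + c') = form_ext \<phi> a c + form_ext \<phi> a c'"
      unfolding form_ext_left_unit[OF e(1,2) ks] form_ext_left_unit[OF e(1,3) ks]
        form_ext_left_unit[OF e(1,4) ks] ext_sum_def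
      using bil' by (simp add: distrib_left ep_add sum_list_pairs_add)
  next
    fix k and a c :: 'a
    obtain e where e: "e \<in> R" "a * e = a" "scA k a * e = scA k a" "e * c = c" "e * scA k c = scA k c"
      using coinv_local_unit[of "{a,c,scA k a, scA k c}"] by auto
    obtain ks where ks: "coinv_decomp e ks" using coinv_decomp_decomp e(1) by blast
    show "form_ext \<phi> (scA k a) c = k * form_ext \<phi> a c"
      unfolding form_ext_right_unit[OF e(1,2) ks] form_ext_right_unit[OF e(1,3) ks] ext_sum_def
      using bil' by (simp add: ep_scale sum_list_pairs_const_mult)
    show "form_ext \<phi> a (scA k c) = k * form_ext \<phi> a c"
      unfolding form_ext_left_unit[OF e(1,4) ks] form_ext_left_unit[OF e(1,5) ks] ext_sum_def
      using bil' by (simp add: ep_scale sum_list_pairs_const_mult)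
  qed
qed

lemma form_ext_balanced: "r \<in> R \<Longrightarrow> form_ext \<phi> (a * r) c = form_ext \<phi> a (r * c)"
proof -
  assume r: "r \<in> R"
  obtain e where e: "e \<in> R" "e * c = c" using coinv_unit by blast
  obtain g where g: "g \<in> R" "a * g = a" using coinv_unit by blast
  obtain ks where ks: "coinv_decomp e ks" using coinv_decomp_decomp e(1) by blast
  obtain gs where gs: "coinv_decomp g gs" using coinv_decomp_decomp g(1) by blast
  from ext_sum_exchange[OF coinv_decomp_mult_left[OF r ks] gs, of a c]
  show ?thesis
    unfolding form_ext_left_unit[OF e ks] form_ext_right_unit[OF g(1,2) gs] ext_sum_def sum_list_map_apfst
    using e(2) g(2) by (simp add: mult.assoc)
qed

lemma form_ext_restrict: "x \<in> B \<Longrightarrow> y \<in> B \<Longrightarrow> form_ext \<phi> x y = \<phi> x y"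
proof -
  assume x: "x \<in> B" and y: "y \<in> B"
  obtain e where e: "e \<in> R" "x * e = x" "e * y = y" using coinv_local_unit[of "{x,y}"] by auto
  obtain ks where ks: "coinv_decomp e ks" using coinv_decomp_decomp e(1) by blast
  have x_fix: "ep x = x" "lp x = x" "rp x = x" using x by auto
  have ep_x_mult: "ep (x * r) = ep x * ep r" for r
    unfolding ep_def using x_fix by (simp add: rp_mult lp_mult mult_lp)
  have "form_ext \<phi> x y = (\<Sum>(r,s)\<leftarrow>ks. \<phi> (ep x * ep r) (ep (s*y)))"
    unfolding form_ext_right_unit[OF e(1,2) ks] ext_sum_def ep_x_mult ..
  also have "\<dots> = (\<Sum>(r,s)\<leftarrow>ks. \<phi> (ep x) (ep (r * pl s * y)))"
    using coinv_decomp_coinv[OF ks] bal ep_mult_ep_coinv by (intro sum_list_pairs_cong) auto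
  also have "\<dots> = \<phi> (ep x) (\<Sum>(r,s)\<leftarrow>ks. ep (r * pl s * y))"
    using bilin_on_sum_list_right[OF bil lsubspace_B, of ks] by auto
  also have "\<dots> = \<phi> x (ep (e * y))"
    using ks x_fix unfolding coinv_decomp_def ep_sum_list[symmetric] by (simp add: sum_list_pairs_mult_right)
  finally show ?thesis using e(3) y by auto
qed

end

lemma galois_map_B_inj:
  assumes xs: "xs \<in> lists (B \<times> B)" and ys: "ys \<in> lists (B \<times> B)"
    and eq: "tensor_eq scA scH B UNIV (galois_map (proj_coaction ep) xs) (galois_map (proj_coaction ep) ys)"
  shows "btensor_eq scA B B (coinv scA scH B (proj_coaction ep)) xs ys"
  unfolding btensor_eq_def
proof safe
  fix \<phi> assume bil: "bilin_on scA scA B B \<phi>"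
    and bal_B: "\<forall>a\<in>B. \<forall>r\<in>coinv scA scH B (proj_coaction ep). \<forall>b\<in>B. \<phi> (a * r) b = \<phi> a (r * b)"
  have bal: "\<And>a r b. r \<in> R \<Longrightarrow> \<phi> (ep a * ep r) (ep b) = \<phi> (ep a) (ep r * ep b)"
    using bal_B ep_coinv by blast
  have xs_eq: "TE (galois_map \<alpha> xs) (galois_map (proj_coaction ep) xs)"
    by (rule tensor_eq_galois_map[OF alg])
      (use xs proj_coaction_eq_alpha[OF coaction_projection_ep] tensor_eq_sym in fastforce)
  have ys_eq: "TE (galois_map (proj_coaction ep) ys) (galois_map \<alpha> ys)"
    by (rule tensor_eq_galois_map[OF alg])
      (use ys proj_coaction_eq_alpha[OF coaction_projection_ep] in fastforce)
  have "TE (galois_map \<alpha> xs) (galois_map \<alpha> ys)"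
    using tensor_eq_trans[OF xs_eq tensor_eq_trans[OF tensor_eq_mono[OF eq] ys_eq]] by simp
  then have "(\<Sum>(a,b)\<leftarrow>xs. form_ext \<phi> a b) = (\<Sum>(a,b)\<leftarrow>ys. form_ext \<phi> a b)"
    using galois_map_alpha_inj bilin_on_form_ext[OF bil bal] form_ext_balanced[OF bil bal]
    unfolding btensor_eq_def by blast
  moreover have "(\<Sum>(a,b)\<leftarrow>zs. form_ext \<phi> a b) = (\<Sum>(a,b)\<leftarrow>zs. \<phi> a b)" if "zs \<in> lists (B \<times> B)" for zs
    using that form_ext_restrict[OF bil bal] by (intro sum_list_pairs_cong) auto
  ultimately show "(\<Sum>(a,b)\<leftarrow>xs. \<phi> a b) = (\<Sum>(a,b)\<leftarrow>ys. \<phi> a b)"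
    using xs ys by metis
qed

lemma galois_sum_coinv_factor:
  assumes bil: "bilin_on scA scH B UNIV \<phi>" and s: "s \<in> R"
  shows "(\<Sum>(c,h)\<leftarrow>proj_coaction ep (ep (s*y)). \<phi> (ep a * c) h) = (\<Sum>(c,h)\<leftarrow>\<alpha> y. \<phi> (ep (a*pl s*c)) h)"
proof -
  define \<chi> where "\<chi> c h = \<phi> (ep a * ep c) h" for c h
  have "BL (\<lambda>c h. \<phi> (ep (a * lp c)) h)"
    using bil sc_linear_ep sc_linear_lp unfolding bilin_on_def sc_linear_def by (auto simp: distrib_left)
  then have bil_\<chi>: "BL \<chi>" unfolding \<chi>_def ep_mult_ep .
  have "TE (\<alpha> (ep (s*y))) (map (apfst ep) (map (apfst (\<lambda>x. s*x)) (\<alpha> y)))"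
    using tensor_eq_trans[OF coaction_projectionD(3)[OF coaction_projection_ep]
        tensor_eq_map_linear[OF alpha_coinv_mult_left[OF s] sc_linear_ep]] .
  from tensor_eqD[OF this bil_\<chi>]
  show ?thesis
    unfolding proj_coaction_def sum_list_map_apfst \<chi>_def using ep_mult_ep_coinv[OF s] by (simp add: mult.assoc)
qed

lemma galois_sum_unit_decomp:
  assumes bil: "bilin_on scA scH B UNIV \<phi>" and ks: "coinv_decomp e ks" and x: "x * e = x"
  shows "(\<Sum>(r,s)\<leftarrow>ks. \<Sum>(c,h)\<leftarrow>proj_coaction ep (ep (s*y)). \<phi> (ep (x*r) * c) h)
    = (\<Sum>(c,h)\<leftarrow>\<alpha> y. \<phi> (ep (x*c)) h)"
proof -
  have "(\<Sum>(r,s)\<leftarrow>ks. \<Sum>(c,h)\<leftarrow>proj_coaction ep (ep (s*y)). \<phi> (ep (x*r) * c) h)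
      = (\<Sum>(r,s)\<leftarrow>ks. \<Sum>(c,h)\<leftarrow>\<alpha> y. \<phi> (ep (x*r*pl s*c)) h)"
    using coinv_decomp_coinv[OF ks] galois_sum_coinv_factor[OF bil] by (intro sum_list_pairs_cong) blast
  also have "\<dots> = (\<Sum>(c,h)\<leftarrow>\<alpha> y. \<Sum>(r,s)\<leftarrow>ks. \<phi> (ep (x*r*pl s*c)) h)"
    by (rule sum_list_pairs_swap)
  also have "\<dots> = (\<Sum>(c,h)\<leftarrow>\<alpha> y. \<phi> (\<Sum>(r,s)\<leftarrow>ks. ep (x*r*pl s*c)) h)"
    using bilin_on_sum_list_left[OF bil lsubspace_B, of ks] by auto
  also have "\<dots> = (\<Sum>(c,h)\<leftarrow>\<alpha> y. \<phi> (ep (x*e*c)) h)"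
    using ks unfolding coinv_decomp_def ep_sum_list[symmetric]
    by (simp add: sum_list_pairs_mult_left sum_list_pairs_mult_right mult.assoc)
  finally show ?thesis using x by simp
qed

text \<open>A preimage under the Galois map of $A$ is moved into $B$ by inserting a
  decomposition $\sum_k r_k p s_k$ of a right unit: $x \otimes y \mapsto
  \sum_k p x r_k p \otimes p s_k y p$.\<close>
lemma galois_map_B_surj:
  assumes zs: "zs \<in> lists (B \<times> (UNIV::'h set))"
  shows "\<exists>xs\<in>lists (B \<times> B). tensor_eq scA scH B UNIV (galois_map (proj_coaction ep) xs) zs"
proof -
  obtain xs0 where xs0: "TE (galois_map \<alpha> xs0) zs" using galois_map_alpha_surj by blast
  obtain e where e: "e \<in> R" "\<forall>x\<in>fst ` set xs0. x * e = x"
    using coinv_local_unit[of "fst ` set xs0"] by auto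
  obtain ks where ks: "coinv_decomp e ks" using coinv_decomp_decomp e(1) by blast
  define xs where "xs = concat (map (\<lambda>(x,y). map (\<lambda>(r,s). (ep (x*r), ep (s*y))) ks) xs0)"
  have "tensor_eq scA scH B UNIV (galois_map (proj_coaction ep) xs) zs"
    unfolding tensor_eq_def
  proof safe
    fix \<phi> assume bil: "bilin_on scA scH B UNIV \<phi>"
    then have bil_ep: "BL (\<lambda>a h. \<phi> (ep a) h)"
      using sc_linear_ep unfolding bilin_on_def sc_linear_def by auto
    have "(\<Sum>(a,b)\<leftarrow>galois_map (proj_coaction ep) xs. \<phi> a b)
        = (\<Sum>(x,y)\<leftarrow>xs0. \<Sum>(r,s)\<leftarrow>ks. \<Sum>(c,h)\<leftarrow>proj_coaction ep (ep (s*y)). \<phi> (ep (x*r) * c) h)"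
      unfolding sum_list_galois_map xs_def sum_list_concat_pairs by (simp add: case_prod_unfold o_def)
    also have "\<dots> = (\<Sum>(x,y)\<leftarrow>xs0. \<Sum>(c,h)\<leftarrow>\<alpha> y. \<phi> (ep (x*c)) h)"
      using galois_sum_unit_decomp[OF bil ks] e(2) by (intro sum_list_pairs_cong) force
    also have "\<dots> = (\<Sum>(a,b)\<leftarrow>zs. \<phi> (ep a) b)"
      using tensor_eqD[OF xs0 bil_ep] unfolding sum_list_galois_map .
    also have "\<dots> = (\<Sum>(a,b)\<leftarrow>zs. \<phi> a b)"
      using zs by (intro sum_list_pairs_cong) auto
    finally show "(\<Sum>(a,b)\<leftarrow>galois_map (proj_coaction ep) xs. \<phi> a b) = (\<Sum>(a,b)\<leftarrow>zs. \<phi> a b)" .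
  qed
  moreover have "xs \<in> lists (B \<times> B)" unfolding xs_def by auto
  ultimately show ?thesis by blast
qed

lemma galois_coaction_B: "galois_coaction scA scH \<Delta> \<epsilon> B (proj_coaction ep)"
proof -
  have mult_B: "x * y \<in> B" if "x \<in> B" "y \<in> B" for x y
    using that ep_mult_mem by auto
  have mult_coaction: "tensor_eq scA scH B UNIV (proj_coaction ep (x * y))
      (tprod (proj_coaction ep x) (proj_coaction ep y))" if "x \<in> B" "y \<in> B" for x y
    using proj_coaction_corner_mult[of 1 1 1 x y] that unfolding cproj_11 by simp
  show ?thesis
    unfolding galois_coaction_def comodule_algebra_on_def
    using comodule_on_range[OF coaction_projection_ep] mult_B mult_coaction
      galois_map_B_inj galois_map_B_surj by blast
qed

section \<open>Strictness of the Morita context\<close>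

lemma lproj_rp_mem_corner: "lproj i (rp r) \<in> corner i 1"
  unfolding mem_corner_iff by (metis lproj_idem lproj_rproj_commute rproj_simps(1) rp_idem)

lemma lp_mult_mem_corner: "rproj i w = w \<Longrightarrow> lp (s * w) \<in> corner 1 i"
  unfolding mem_corner_iff by (metis lproj_rproj_commute rproj_mult lproj_simps(1) lp_idem)

lemma lproj_mem_corner2: "lproj i e \<in> corner i 2"
  unfolding mem_corner_iff by simp

lemma lproj_rp_mult_lp: "s \<in> R \<Longrightarrow> lproj i (rp r) * lp (s * x) = lproj i (r * pl s * x)"
proof -
  assume s: "s \<in> R"
  have "rp r * lp (s * x) = rp r * s * x" by (metis mult_lp rp_idem mult.assoc)
  also have "rp r * s = r * pl s" by (metis mult_lp lp_coinv[OF s])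
  finally show ?thesis by (simp add: lproj_mult[symmetric])
qed

lemma corner_decomp:
  assumes ks: "coinv_decomp e ks" and x: "e * x = x" "lproj i x = x"
  shows "x = (\<Sum>(r,s)\<leftarrow>ks. lproj i (rp r) * lp (s * x))"
proof -
  have "(\<Sum>(r,s)\<leftarrow>ks. lproj i (rp r) * lp (s * x)) = (\<Sum>(r,s)\<leftarrow>ks. lproj i (r * pl s * x))"
    using coinv_decomp_coinv[OF ks] lproj_rp_mult_lp by (intro sum_list_pairs_cong) blast
  also have "\<dots> = lproj i (e * x)"
    using ks unfolding coinv_decomp_def sc_linear_sum_list[OF sc_linear_lproj, symmetric]
    by (simp add: sum_list_pairs_mult_right)
  finally show ?thesis using x by simp
qed

lemma corner_pairing_surj:
  assumes ij: "i \<in> {1,2}" "j \<in> {1,2}" and z: "z \<in> corner i i"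
  shows "\<exists>xs\<in>lists (corner i j \<times> corner j i). (\<Sum>(x,y)\<leftarrow>xs. x * y) = z"
proof -
  obtain e where e: "e \<in> R" "e * z = z" using coinv_unit by blast
  have z_fix: "lproj i z = z" "rproj i z = z" using z unfolding mem_corner_iff by auto
  show ?thesis
  proof (cases "j = 2")
    case True
    have "z \<in> corner 2 i" using z_fix unfolding mem_corner_iff by simp
    moreover have "lproj i e * z = z" using lproj_mult[of i e z] e(2) z_fix by simp
    ultimately show ?thesis using True lproj_mem_corner2 by (intro bexI[of _ "[(lproj i e, z)]"]) auto
  next
    case False
    then have j: "j = 1" using ij by auto
    obtain ks where ks: "coinv_decomp e ks" using coinv_decomp_decomp e(1) by blast
    define xs where "xs = map (\<lambda>(r,s). (lproj i (rp r), lp (s * z))) ks"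
    have "xs \<in> lists (corner i j \<times> corner j i)"
      unfolding xs_def j using lproj_rp_mem_corner lp_mult_mem_corner z_fix(2) by auto
    moreover have "(\<Sum>(x,y)\<leftarrow>xs. x * y) = z"
      using corner_decomp[OF ks e(2) z_fix(1)] unfolding xs_def by (simp add: case_prod_unfold o_def)
    ultimately show ?thesis by blast
  qed
qed

lemma corner_pairing_inj_through_A:
  assumes i: "i \<in> {1,2}"
    and xs: "xs \<in> lists (corner i 2 \<times> corner 2 i)" and ys: "ys \<in> lists (corner i 2 \<times> corner 2 i)"
    and eq: "(\<Sum>(x,y)\<leftarrow>xs. x * y) = (\<Sum>(x,y)\<leftarrow>ys. x * y)"
    and bil: "bilin_on scA scA (corner i 2) (corner 2 i) \<phi>"
    and bal: "\<forall>a\<in>corner i 2. \<forall>r\<in>corner 2 2. \<forall>b\<in>corner 2 i. \<phi> (a * r) b = \<phi> a (r * b)"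
  shows "(\<Sum>(x,y)\<leftarrow>xs. \<phi> x y) = (\<Sum>(x,y)\<leftarrow>ys. \<phi> x y)"
proof -
  obtain e where e: "e \<in> R" "\<forall>x\<in>fst ` set (xs @ ys). e * x = x"
    using coinv_local_unit[of "fst ` set (xs @ ys)"] by auto
  let ?u = "lproj i e"
  have V: "lsubspace scA (corner 2 i)" using lsubspace_corner i by auto
  have F: "\<forall>v\<in>corner 2 i. \<forall>w\<in>corner 2 i. \<phi> ?u (v + w) = \<phi> ?u v + \<phi> ?u w"
    using bil lproj_mem_corner2 unfolding bilin_on_def by blast
  have unit: "e * x = x" if "(x, y) \<in> set (xs @ ys)" for x y
    using e(2) that by (metis fst_conv image_eqI)
  have factor: "\<forall>(x,y)\<in>set zs. x * y \<in> corner 2 i \<and> \<phi> x y = \<phi> ?u (x * y)"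
    if zs: "zs \<in> {xs, ys}" for zs
  proof safe
    fix x y assume xy: "(x, y) \<in> set zs"
    then have x: "x \<in> corner i 2" and y: "y \<in> corner 2 i" using zs xs ys by auto
    have x22: "x \<in> corner 2 2" by (simp add: cproj_22)
    show "x * y \<in> corner 2 i" using corner_mult[OF x22 y] .
    have "?u * x = lproj i (e * x)" by (rule lproj_mult[symmetric])
    also have "\<dots> = x" using unit[of x y] xy zs x unfolding mem_corner_iff by auto
    finally show "\<phi> x y = \<phi> ?u (x * y)"
      using bal[rule_format, OF lproj_mem_corner2[of i e] x22 y] by simp
  qed
  show ?thesis
    using sum_list_factor_through_mult[OF V F factor] eq by simp
qed

lemma balanced_form_through_B:
  assumes i: "i \<in> {1,2}"
    and bil: "bilin_on scA scA (corner i 1) (corner 1 i) \<phi>"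
    and bal: "\<forall>a\<in>corner i 1. \<forall>r\<in>corner 1 1. \<forall>b\<in>corner 1 i. \<phi> (a * r) b = \<phi> a (r * b)"
    and ks: "coinv_decomp e ks" and x: "x \<in> corner i 1" "e * x = x" and y: "y \<in> corner 1 i"
  shows "\<phi> x y = (\<Sum>(r,s)\<leftarrow>ks. \<phi> (lproj i (rp r)) (lp (s * (x * y))))"
proof -
  have x_fix: "lproj i x = x" "rp x = x" using x(1) unfolding mem_corner_iff by auto
  have mem: "lproj i (rp r) * lp (s * x) \<in> corner i 1" "lp (s * x) \<in> corner 1 1" for r s
    using corner_mult[OF lproj_rp_mem_corner] lp_mult_mem_corner x_fix(2) by auto
  have "\<phi> x y = \<phi> (\<Sum>(r,s)\<leftarrow>ks. lproj i (rp r) * lp (s * x)) y"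
    using corner_decomp[OF ks x(2) x_fix(1)] by simp
  also have "\<dots> = (\<Sum>(r,s)\<leftarrow>ks. \<phi> (lproj i (rp r) * lp (s * x)) y)"
    by (rule bilin_on_sum_list_left[OF bil lsubspace_corner[OF i] _ y]) (use mem(1) in auto)
  also have "\<dots> = (\<Sum>(r,s)\<leftarrow>ks. \<phi> (lproj i (rp r)) (lp (s * (x * y))))"
  proof (intro sum_list_pairs_cong)
    fix r s
    show "\<phi> (lproj i (rp r) * lp (s * x)) y = \<phi> (lproj i (rp r)) (lp (s * (x * y)))"
      using bal[rule_format, OF lproj_rp_mem_corner mem(2) y] lp_mult[of "s * x" y]
      by (simp add: mult.assoc)
  qed
  finally show ?thesis .
qed

lemma corner_pairing_inj_through_B:
  assumes i: "i \<in> {1,2}"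
    and xs: "xs \<in> lists (corner i 1 \<times> corner 1 i)" and ys: "ys \<in> lists (corner i 1 \<times> corner 1 i)"
    and eq: "(\<Sum>(x,y)\<leftarrow>xs. x * y) = (\<Sum>(x,y)\<leftarrow>ys. x * y)"
    and bil: "bilin_on scA scA (corner i 1) (corner 1 i) \<phi>"
    and bal: "\<forall>a\<in>corner i 1. \<forall>r\<in>corner 1 1. \<forall>b\<in>corner 1 i. \<phi> (a * r) b = \<phi> a (r * b)"
  shows "(\<Sum>(x,y)\<leftarrow>xs. \<phi> x y) = (\<Sum>(x,y)\<leftarrow>ys. \<phi> x y)"
proof -
  obtain e where e: "e \<in> R" "\<forall>x\<in>fst ` set (xs @ ys). e * x = x"
    using coinv_local_unit[of "fst ` set (xs @ ys)"] by auto
  obtain ks where ks: "coinv_decomp e ks" using coinv_decomp_decomp e(1) by blast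
  have unit: "e * x = x" if "(x, y) \<in> set (xs @ ys)" for x y
    using e(2) that by (metis fst_conv image_eqI)
  define F where "F w = (\<Sum>(r,s)\<leftarrow>ks. \<phi> (lproj i (rp r)) (lp (s * w)))" for w
  have V: "lsubspace scA (corner i i)" using lsubspace_corner i by auto
  have F: "\<forall>v\<in>corner i i. \<forall>w\<in>corner i i. F (v + w) = F v + F w"
  proof (intro ballI)
    fix v w assume "v \<in> corner i i" "w \<in> corner i i"
    then have "lp (s * v) \<in> corner 1 i" "lp (s * w) \<in> corner 1 i" for s
      using lp_mult_mem_corner unfolding mem_corner_iff by auto
    moreover have "lp (s * (v + w)) = lp (s * v) + lp (s * w)" for s
      using sc_linear_lp unfolding sc_linear_def by (simp add: distrib_left)
    ultimately have "\<phi> (lproj i (rp r)) (lp (s * (v + w)))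
        = \<phi> (lproj i (rp r)) (lp (s * v)) + \<phi> (lproj i (rp r)) (lp (s * w))" for r s
      using bil lproj_rp_mem_corner unfolding bilin_on_def by metis
    then show "F (v + w) = F v + F w" unfolding F_def by (simp add: sum_list_pairs_add)
  qed
  have factor: "\<forall>(x,y)\<in>set zs. x * y \<in> corner i i \<and> \<phi> x y = F (x * y)"
    if zs: "zs \<in> {xs, ys}" for zs
  proof safe
    fix x y assume xy: "(x, y) \<in> set zs"
    then have x: "x \<in> corner i 1" and y: "y \<in> corner 1 i" using zs xs ys by auto
    then show "x * y \<in> corner i i" by (rule corner_mult)
    have "e * x = x" using unit[of x y] xy zs by auto
    from balanced_form_through_B[OF i bil bal ks x this y]
    show "\<phi> x y = F (x * y)" unfolding F_def .
  qed
  show ?thesis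
    using sum_list_factor_through_mult[OF V F factor] eq by simp
qed

lemma corner_pairing_inj:
  assumes ij: "i \<in> {1,2}" "j \<in> {1,2}"
    and xs: "xs \<in> lists (corner i j \<times> corner j i)" and ys: "ys \<in> lists (corner i j \<times> corner j i)"
    and eq: "(\<Sum>(x,y)\<leftarrow>xs. x * y) = (\<Sum>(x,y)\<leftarrow>ys. x * y)"
  shows "btensor_eq scA (corner i j) (corner j i) (corner j j) xs ys"
  unfolding btensor_eq_def
proof safe
  fix \<phi> assume "bilin_on scA scA (corner i j) (corner j i) \<phi>"
    "\<forall>a\<in>corner i j. \<forall>r\<in>corner j j. \<forall>b\<in>corner j i. \<phi> (a * r) b = \<phi> a (r * b)"
  moreover have "j = 1 \<or> j = 2" using ij by auto
  ultimately show "(\<Sum>(x,y)\<leftarrow>xs. \<phi> x y) = (\<Sum>(x,y)\<leftarrow>ys. \<phi> x y)"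
    using corner_pairing_inj_through_A[OF ij(1) _ _ eq] corner_pairing_inj_through_B[OF ij(1) _ _ eq] xs ys
    by blast
qed

lemma corner_context_eq:
  "i \<in> {1,2} \<Longrightarrow> j \<in> {1,2} \<Longrightarrow> corner_context B (range lp) (range rp) i j = corner i j"
  unfolding corner_context_def using cproj_11 cproj_12 cproj_21 cproj_22 by auto

lemma corner_coaction_eq_alpha:
  "i \<in> {1,2} \<Longrightarrow> j \<in> {1,2} \<Longrightarrow> x \<in> corner_context B (range lp) (range rp) i j \<Longrightarrow>
    TE (proj_coaction (cproj i j) x) (\<alpha> x)"
  using proj_coaction_eq_alpha[OF coaction_projection_cproj] corner_context_eq by simp

lemma strict_equivariant_morita_corner_context:
  "strict_equivariant_morita_context scA scH \<Delta> \<epsilon> (corner_context B (range lp) (range rp))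
     (\<lambda>i j. proj_coaction (cproj i j))"
  unfolding strict_equivariant_morita_context_def
proof (intro conjI ballI)
  fix i j assume ij: "i \<in> {1::nat,2}" "j \<in> {1::nat,2}"
  show "comodule_on scA scH \<Delta> \<epsilon> (corner_context B (range lp) (range rp) i j) (proj_coaction (cproj i j))"
    unfolding corner_context_eq[OF ij] by (rule comodule_on_range[OF coaction_projection_cproj[OF ij]])
  fix l x y assume l: "l \<in> {1::nat,2}"
    and x: "x \<in> corner_context B (range lp) (range rp) i j" and y: "y \<in> corner_context B (range lp) (range rp) j l"
  then have x': "x \<in> corner i j" and y': "y \<in> corner j l" using corner_context_eq ij by auto
  show "x * y \<in> corner_context B (range lp) (range rp) i l"
    unfolding corner_context_eq[OF ij(1) l] by (rule corner_mult[OF x' y'])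
  show "tensor_eq scA scH (corner_context B (range lp) (range rp) i l) UNIV (proj_coaction (cproj i l) (x * y))
          (tprod (proj_coaction (cproj i j) x) (proj_coaction (cproj j l) y))"
    unfolding corner_context_eq[OF ij(1) l] by (rule proj_coaction_corner_mult[OF ij l x' y'])
next
  fix i j xs ys assume ij: "i \<in> {1::nat,2}" "j \<in> {1::nat,2}"
    and "xs \<in> lists (corner_context B (range lp) (range rp) i j \<times> corner_context B (range lp) (range rp) j i)"
    and "ys \<in> lists (corner_context B (range lp) (range rp) i j \<times> corner_context B (range lp) (range rp) j i)"
  then show "(\<Sum>(x,y)\<leftarrow>xs. x * y) = (\<Sum>(x,y)\<leftarrow>ys. x * y) \<longrightarrow>
      btensor_eq scA (corner_context B (range lp) (range rp) i j) (corner_context B (range lp) (range rp) j i)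
        (corner_context B (range lp) (range rp) j j) xs ys"
    unfolding corner_context_eq[OF ij] corner_context_eq[OF ij(2,1)] corner_context_eq[OF ij(2,2)]
    using corner_pairing_inj[OF ij] by blast
next
  fix i j z assume ij: "i \<in> {1::nat,2}" "j \<in> {1::nat,2}"
    and "z \<in> corner_context B (range lp) (range rp) i i"
  then show "\<exists>xs\<in>lists (corner_context B (range lp) (range rp) i j \<times> corner_context B (range lp) (range rp) j i).
      (\<Sum>(x,y)\<leftarrow>xs. x * y) = z"
    unfolding corner_context_eq[OF ij] corner_context_eq[OF ij(2,1)] corner_context_eq[OF ij(1,1)]
    using corner_pairing_surj[OF ij] by blast
qed

end

theorem mainTheorem7:
  fixes scA :: "'k::field \<Rightarrow> 'a::ring \<Rightarrow> 'a"
    and scH :: "'k \<Rightarrow> 'h::ring_1 \<Rightarrow> 'h"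
    and \<Delta> :: "'h \<Rightarrow> ('h \<times> 'h) list" and \<epsilon> :: "'h \<Rightarrow> 'k" and S :: "'h \<Rightarrow> 'h"
    and \<alpha> :: "'a \<Rightarrow> ('a \<times> 'h) list"
    and pl pr :: "'a \<Rightarrow> 'a"
  assumes hopf: "hopf_algebra scH \<Delta> \<epsilon> S"
    and alg: "algebra_over scA"
    and gal: "galois_coaction scA scH \<Delta> \<epsilon> UNIV \<alpha>"
    and lu: "coinv_local_units scA scH \<alpha>"
    and mult: "multiplier_on scA (coinv scA scH UNIV \<alpha>) pl pr"
    and idem: "idempotent_multiplier (coinv scA scH UNIV \<alpha>) pl pr"
    and full: "module.span scA {x * pl y | x y. x \<in> coinv scA scH UNIV \<alpha> \<and> y \<in> coinv scA scH UNIV \<alpha>}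
               = coinv scA scH UNIV \<alpha>"
  shows "let R = coinv scA scH UNIV \<alpha>;
             B = range (\<lambda>a. mext_l R pl (mext_r R pr a));
             pA = range (mext_l R pl);
             Ap = range (mext_r R pr)
         in (\<exists>\<beta>. (\<forall>b\<in>B. tensor_eq scA scH UNIV UNIV (\<beta> b) (\<alpha> b)) \<and>
                 galois_coaction scA scH \<Delta> \<epsilon> B \<beta>) \<and>
            (\<exists>gam. (\<forall>i\<in>{1,2}. \<forall>j\<in>{1,2}. \<forall>x\<in>corner_context B pA Ap i j.
                        tensor_eq scA scH UNIV UNIV (gam i j x) (\<alpha> x)) \<and>
                   strict_equivariant_morita_context scA scH \<Delta> \<epsilon> (corner_context B pA Ap) gam)"
proof -
  interpret corner_setting scA scH \<Delta> \<epsilon> S \<alpha> pl pr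
    using assms by unfold_locales
  have B_eq: "(\<lambda>a. mext_l R pl (mext_r R pr a)) = ep" unfolding ep_def ..
  show ?thesis
    unfolding Let_def B_eq
  proof (intro conjI)
    show "\<exists>\<beta>. (\<forall>b\<in>B. TE (\<beta> b) (\<alpha> b)) \<and> galois_coaction scA scH \<Delta> \<epsilon> B \<beta>"
      using proj_coaction_eq_alpha[OF coaction_projection_ep] galois_coaction_B
      by (intro exI[of _ "proj_coaction ep"] conjI ballI)
    show "\<exists>gam. (\<forall>i\<in>{1,2}. \<forall>j\<in>{1,2}. \<forall>x\<in>corner_context B (range lp) (range rp) i j. TE (gam i j x) (\<alpha> x))
        \<and> strict_equivariant_morita_context scA scH \<Delta> \<epsilon> (corner_context B (range lp) (range rp)) gam"
      using corner_coaction_eq_alpha strict_equivariant_morita_corner_context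
      by (intro exI[of _ "\<lambda>i j. proj_coaction (cproj i j)"] conjI ballI)
  qed
qed

end
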